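(* Let $W$ be a binary MAC with $m$ users, let $X[E_m]$ have i.i.d. uniform components on $\mathbb{F}_2$, and let $Y$ be the output of $W$ on input $X[E_m]$. If $I(X[S];Y,X[S^c])$ is an integer for every $S\subseteq E_m$, then $I(X[E_m]\cdot S;Y)\in\{0,1\}$ for every $S\subseteq E_m$, and the family $(I(X[E_m]\cdot S;Y))_{S\subseteq E_m}$ is uniquely determined by the family $(I(X[S];Y,X[S^c]))_{S\subseteq E_m}$. Conversely, if $I(X[E_m]\cdot S;Y)\in\{0,1\}$ for every $S\subseteq E_m$, then $I(X[S];Y,X[S^c])$ is an integer for every $S\subseteq E_m$ and the family $(I(X[S];Y,X[S^c]))_{S}$ is uniquely determined by the family $(I(X[E_m]\cdot S;Y))_{S}$.
   Context: A binary MAC with $m$ users is a channel $W$ with input alphabet $\mathbb{F}_2^m$ and finite output alphabet. $E_m=\{1,\dots,m\}$; for $S\subseteq E_m$, $X[S]=(X[i])_{i\in S}$, $S^c=E_m\setminus S$, and $X[E_m]\cdot S=\bigoplus_{i\in S}X[i]$ (sum in $\mathbb{F}_2$). Mutual information is in bits. "Uniquely determined" means that any two binary MACs with $m$ users having the same values of the given family also have the same values of the other family. *)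

theory Defs
  imports Complex_Main
begin

text \<open>Users are E_m = {1..m}. An input vector X[E_m] in F_2^m is represented by the
  set x \<subseteq> {1..m} of users whose bit equals 1.\<close>

definition users :: "nat \<Rightarrow> nat set" where
  "users m = {1..m}"

definition inputs :: "nat \<Rightarrow> nat set set" where
  "inputs m = Pow (users m)"

definition binary_mac :: "nat \<Rightarrow> (nat set \<Rightarrow> 'b::finite \<Rightarrow> real) \<Rightarrow> bool" where
  "binary_mac m W \<longleftrightarrow>
     (\<forall>x\<in>inputs m. (\<forall>y. 0 \<le> W x y) \<and> (\<Sum>y\<in>UNIV. W x y) = 1)"

definition mutual_info :: "'o set \<Rightarrow> ('o \<Rightarrow> real) \<Rightarrow> ('o \<Rightarrow> 'a) \<Rightarrow> ('o \<Rightarrow> 'c) \<Rightarrow> real" where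
  "mutual_info \<Omega> p A B =
     (\<Sum>a\<in>A ` \<Omega>. \<Sum>b\<in>B ` \<Omega>.
        let pab = (\<Sum>\<omega>\<in>{\<omega>\<in>\<Omega>. A \<omega> = a \<and> B \<omega> = b}. p \<omega>);
            pa = (\<Sum>\<omega>\<in>{\<omega>\<in>\<Omega>. A \<omega> = a}. p \<omega>);
            pb = (\<Sum>\<omega>\<in>{\<omega>\<in>\<Omega>. B \<omega> = b}. p \<omega>)
        in if pab = 0 then 0 else pab * log 2 (pab / (pa * pb)))"

definition mac_space :: "nat \<Rightarrow> (nat set \<times> 'b::finite) set" where
  "mac_space m = inputs m \<times> UNIV"

definition mac_pmf :: "nat \<Rightarrow> (nat set \<Rightarrow> 'b::finite \<Rightarrow> real) \<Rightarrow> nat set \<times> 'b \<Rightarrow> real" where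
  "mac_pmf m W = (\<lambda>(x, y). W x y / 2 ^ m)"

definition cond_mi :: "nat \<Rightarrow> (nat set \<Rightarrow> 'b::finite \<Rightarrow> real) \<Rightarrow> nat set \<Rightarrow> real" where
  "cond_mi m W S = mutual_info (mac_space m) (mac_pmf m W)
      (\<lambda>(x, y). x \<inter> S) (\<lambda>(x, y). (y, x \<inter> (users m - S)))"

text \<open>I(X[E_m] . S; Y), where X[E_m] . S is the F_2-sum of the bits indexed by S
  (True iff an odd number of users in S send 1).\<close>

definition lin_mi :: "nat \<Rightarrow> (nat set \<Rightarrow> 'b::finite \<Rightarrow> real) \<Rightarrow> nat set \<Rightarrow> real" where
  "lin_mi m W S = mutual_info (mac_space m) (mac_pmf m W)
      (\<lambda>(x, y). odd (card (x \<inter> S))) (\<lambda>(x, y). y)"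

end

(*
  Write D(U) = H(X[U] | Y). Then I(X[S]; Y, X[S^c]) = |S| + D(S^c) - D(E_m), and for S nonempty
  I(X[E_m].S; Y) = 1 - H(X[E_m].S | Y). Both integrality conditions turn out to be equivalent to a
  dichotomy: every parity X[E_m].T is either a function of Y or independent of Y.

  If all D(U) are integers, adding one user to U raises D by an amount in [0, 1], and the equality
  cases of both bounds show inductively that, given any output y, X[U] is uniform on its support
  with mass 2^-D(U). Parseval's identity then gives sum_{T <= U} b_y(T)^2 = 2^(|U| - D(U)) for the
  biases b_y(T) = E[(-1)^(X[E_m].T) | Y = y], and Moebius inversion over subsets shows that every
  b_y(T)^2 is an integer in [0, 1], the same for all outputs y and for all channels with the same D.

  Conversely, I(X[E_m].S; Y) in {0, 1} states the dichotomy for S directly. For a dichotomous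
  channel the sets T <= U with determined parity form a subgroup L_U of (2^U, symmetric difference),
  Walsh inversion shows that X[U] given Y = y is uniform on its support with mass |L_U| / 2^|U|, and
  hence I(X[S]; Y, X[S^c]) = log |L_{E_m}| - log |L_{S^c}|, an integer since |L_U| is a power of 2.
  Both families are functions of the determined sets, which either family determines in turn.
*)

theory Submission
  imports Defs "HOL-Computational_Algebra.Primes"
begin

section \<open>Entropy of a finite distribution\<close>

definition atom_prob :: "'o set \<Rightarrow> ('o \<Rightarrow> real) \<Rightarrow> ('o \<Rightarrow> 'a) \<Rightarrow> 'o \<Rightarrow> real" where
  "atom_prob \<Omega> p A \<omega> = (\<Sum>\<omega>'\<in>{\<omega>'\<in>\<Omega>. A \<omega>' = A \<omega>}. p \<omega>')"

definition entropy :: "'o set \<Rightarrow> ('o \<Rightarrow> real) \<Rightarrow> ('o \<Rightarrow> 'a) \<Rightarrow> real" where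
  "entropy \<Omega> p A = - (\<Sum>\<omega>\<in>\<Omega>. p \<omega> * log 2 (atom_prob \<Omega> p A \<omega>))"

lemma atom_prob_cong:
  assumes "\<And>\<omega>' \<omega>''. \<omega>' \<in> \<Omega> \<Longrightarrow> \<omega>'' \<in> \<Omega> \<Longrightarrow> A \<omega>' = A \<omega>'' \<longleftrightarrow> B \<omega>' = B \<omega>''" and "\<omega> \<in> \<Omega>"
  shows "atom_prob \<Omega> p A \<omega> = atom_prob \<Omega> p B \<omega>"
  unfolding atom_prob_def using assms by (intro sum.cong) auto

lemma entropy_cong:
  assumes "\<And>\<omega> \<omega>'. \<omega> \<in> \<Omega> \<Longrightarrow> \<omega>' \<in> \<Omega> \<Longrightarrow> A \<omega> = A \<omega>' \<longleftrightarrow> B \<omega> = B \<omega>'"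
  shows "entropy \<Omega> p A = entropy \<Omega> p B"
  unfolding entropy_def using atom_prob_cong[of \<Omega> A B, OF assms] by simp

lemma sum_atom_div_atom_prob_le_1:
  "(\<Sum>\<omega>\<in>{\<omega>\<in>\<Omega>. C \<omega> = c}. p \<omega> / atom_prob \<Omega> p C \<omega>) \<le> 1"
proof -
  have "(\<Sum>\<omega>\<in>{\<omega>\<in>\<Omega>. C \<omega> = c}. p \<omega> / atom_prob \<Omega> p C \<omega>)
      = (\<Sum>\<omega>\<in>{\<omega>\<in>\<Omega>. C \<omega> = c}. p \<omega>) / (\<Sum>\<omega>\<in>{\<omega>\<in>\<Omega>. C \<omega> = c}. p \<omega>)"
    unfolding atom_prob_def sum_divide_distrib by (intro sum.cong) auto
  then show ?thesis by simp
qed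

locale finite_pmf =
  fixes \<Omega> :: "'o set" and p :: "'o \<Rightarrow> real"
  assumes finite_space: "finite \<Omega>"
    and pmf_nonneg: "\<omega> \<in> \<Omega> \<Longrightarrow> 0 \<le> p \<omega>"
    and sum_pmf: "(\<Sum>\<omega>\<in>\<Omega>. p \<omega>) = 1"
begin

lemma pmf_le_atom_prob:
  assumes "\<omega> \<in> \<Omega>"
  shows "p \<omega> \<le> atom_prob \<Omega> p A \<omega>"
proof -
  have "p \<omega> = (\<Sum>\<omega>'\<in>{\<omega>}. p \<omega>')" by simp
  also have "\<dots> \<le> atom_prob \<Omega> p A \<omega>"
    unfolding atom_prob_def using assms finite_space pmf_nonneg by (intro sum_mono2) auto
  finally show ?thesis .
qed

lemma atom_prob_pos: "\<omega> \<in> \<Omega> \<Longrightarrow> 0 < p \<omega> \<Longrightarrow> 0 < atom_prob \<Omega> p A \<omega>"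
  using pmf_le_atom_prob[of \<omega> A] by linarith

lemma atom_prob_pair_le: "atom_prob \<Omega> p (\<lambda>\<omega>. (A \<omega>, B \<omega>)) \<omega> \<le> atom_prob \<Omega> p A \<omega>"
  unfolding atom_prob_def using finite_space pmf_nonneg by (intro sum_mono2) auto

lemma sum_pmf_mult_cong:
  assumes "\<And>\<omega>. \<omega> \<in> \<Omega> \<Longrightarrow> 0 < p \<omega> \<Longrightarrow> f \<omega> = g \<omega>"
  shows "(\<Sum>\<omega>\<in>\<Omega>. p \<omega> * f \<omega>) = (\<Sum>\<omega>\<in>\<Omega>. p \<omega> * g \<omega>)"
proof (intro sum.cong refl)
  fix \<omega> assume "\<omega> \<in> \<Omega>"
  then show "p \<omega> * f \<omega> = p \<omega> * g \<omega>"
    using assms[of \<omega>] pmf_nonneg[of \<omega>] by (cases "p \<omega> = 0") auto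
qed

lemma mutual_info_eq_entropy:
  "mutual_info \<Omega> p A B = entropy \<Omega> p A + entropy \<Omega> p B - entropy \<Omega> p (\<lambda>\<omega>. (A \<omega>, B \<omega>))"
proof -
  let ?P = "atom_prob \<Omega> p"
  define L where "L \<omega> = (if ?P (\<lambda>\<omega>. (A \<omega>, B \<omega>)) \<omega> = 0 then 0
    else log 2 (?P (\<lambda>\<omega>. (A \<omega>, B \<omega>)) \<omega> / (?P A \<omega> * ?P B \<omega>)))" for \<omega>
  have "mutual_info \<Omega> p A B = (\<Sum>ab\<in>A ` \<Omega> \<times> B ` \<Omega>.
      \<Sum>\<omega>\<in>{\<omega>\<in>\<Omega>. (A \<omega>, B \<omega>) = ab}. p \<omega> * L \<omega>)"
    unfolding mutual_info_def sum.cartesian_product Let_def L_def atom_prob_def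
    by (intro sum.cong refl) (auto simp: sum_distrib_right intro!: sum.cong)
  also have "\<dots> = (\<Sum>\<omega>\<in>\<Omega>. p \<omega> * L \<omega>)"
    using finite_space by (intro sum.group) auto
  also have "\<dots> = (\<Sum>\<omega>\<in>\<Omega>. p \<omega> * (log 2 (?P (\<lambda>\<omega>. (A \<omega>, B \<omega>)) \<omega>) - log 2 (?P A \<omega>) - log 2 (?P B \<omega>)))"
  proof (intro sum_pmf_mult_cong)
    fix \<omega> assume "\<omega> \<in> \<Omega>" "0 < p \<omega>"
    then have "0 < ?P (\<lambda>\<omega>. (A \<omega>, B \<omega>)) \<omega>" "0 < ?P A \<omega>" "0 < ?P B \<omega>"
      by (simp_all add: atom_prob_pos)
    then show "L \<omega> = log 2 (?P (\<lambda>\<omega>. (A \<omega>, B \<omega>)) \<omega>) - log 2 (?P A \<omega>) - log 2 (?P B \<omega>)"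
      by (simp add: L_def log_divide log_mult)
  qed
  finally show ?thesis
    unfolding entropy_def by (simp add: algebra_simps sum.distrib sum_subtractf)
qed

lemma entropy_eq_of_atom_prob_scaled:
  assumes "0 < c" and "\<And>\<omega>. \<omega> \<in> \<Omega> \<Longrightarrow> 0 < p \<omega> \<Longrightarrow> atom_prob \<Omega> p A \<omega> = c * atom_prob \<Omega> p B \<omega>"
  shows "entropy \<Omega> p A = entropy \<Omega> p B - log 2 c"
proof -
  have "(\<Sum>\<omega>\<in>\<Omega>. p \<omega> * log 2 (atom_prob \<Omega> p A \<omega>))
      = (\<Sum>\<omega>\<in>\<Omega>. p \<omega> * (log 2 c + log 2 (atom_prob \<Omega> p B \<omega>)))"
  proof (intro sum_pmf_mult_cong)
    fix \<omega> assume "\<omega> \<in> \<Omega>" "0 < p \<omega>"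
    then show "log 2 (atom_prob \<Omega> p A \<omega>) = log 2 c + log 2 (atom_prob \<Omega> p B \<omega>)"
      using assms atom_prob_pos[of \<omega> B] by (simp add: log_mult)
  qed
  then show ?thesis
    unfolding entropy_def using sum_pmf by (simp add: algebra_simps sum.distrib flip: sum_distrib_right)
qed

lemma entropy_const_atom_prob:
  assumes "0 < c" and "\<And>\<omega>. \<omega> \<in> \<Omega> \<Longrightarrow> 0 < p \<omega> \<Longrightarrow> atom_prob \<Omega> p A \<omega> = c"
  shows "entropy \<Omega> p A = - log 2 c"
proof -
  have const_atom: "atom_prob \<Omega> p (\<lambda>_. ()) \<omega> = 1" for \<omega>
    using sum_pmf by (simp add: atom_prob_def)
  then have "entropy \<Omega> p (\<lambda>_. ()) = 0"
    by (simp add: entropy_def)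
  moreover have "entropy \<Omega> p A = entropy \<Omega> p (\<lambda>_. ()) - log 2 c"
    using assms by (intro entropy_eq_of_atom_prob_scaled) (simp_all add: const_atom)
  ultimately show ?thesis by simp
qed

lemma entropy_pair_minus_entropy:
  "entropy \<Omega> p (\<lambda>\<omega>. (A \<omega>, B \<omega>)) - entropy \<Omega> p A
     = (\<Sum>\<omega>\<in>\<Omega>. p \<omega> * log 2 (atom_prob \<Omega> p A \<omega> / atom_prob \<Omega> p (\<lambda>\<omega>. (A \<omega>, B \<omega>)) \<omega>))"
proof -
  have "(\<Sum>\<omega>\<in>\<Omega>. p \<omega> * log 2 (atom_prob \<Omega> p A \<omega> / atom_prob \<Omega> p (\<lambda>\<omega>. (A \<omega>, B \<omega>)) \<omega>))
      = (\<Sum>\<omega>\<in>\<Omega>. p \<omega> * (log 2 (atom_prob \<Omega> p A \<omega>) - log 2 (atom_prob \<Omega> p (\<lambda>\<omega>. (A \<omega>, B \<omega>)) \<omega>)))"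
  proof (intro sum_pmf_mult_cong)
    fix \<omega> assume "\<omega> \<in> \<Omega>" "0 < p \<omega>"
    then have "0 < atom_prob \<Omega> p A \<omega>" "0 < atom_prob \<Omega> p (\<lambda>\<omega>. (A \<omega>, B \<omega>)) \<omega>"
      by (simp_all add: atom_prob_pos)
    then show "log 2 (atom_prob \<Omega> p A \<omega> / atom_prob \<Omega> p (\<lambda>\<omega>. (A \<omega>, B \<omega>)) \<omega>)
        = log 2 (atom_prob \<Omega> p A \<omega>) - log 2 (atom_prob \<Omega> p (\<lambda>\<omega>. (A \<omega>, B \<omega>)) \<omega>)"
      by (simp add: log_divide)
  qed
  then show ?thesis
    unfolding entropy_def by (simp add: algebra_simps sum_subtractf)
qed

lemma atom_prob_ratio_ge_1:
  assumes "\<omega> \<in> \<Omega>" and "0 < p \<omega>"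
  shows "1 \<le> atom_prob \<Omega> p A \<omega> / atom_prob \<Omega> p (\<lambda>\<omega>. (A \<omega>, B \<omega>)) \<omega>"
  using atom_prob_pos[OF assms, of "\<lambda>\<omega>. (A \<omega>, B \<omega>)"] atom_prob_pair_le[of A B \<omega>]
  by (simp add: le_divide_eq_1_pos)

lemma pmf_log_atom_prob_ratio_nonneg:
  assumes "\<omega> \<in> \<Omega>"
  shows "0 \<le> p \<omega> * log 2 (atom_prob \<Omega> p A \<omega> / atom_prob \<Omega> p (\<lambda>\<omega>. (A \<omega>, B \<omega>)) \<omega>)"
proof (cases "p \<omega> = 0")
  case False
  with assms pmf_nonneg have "0 < p \<omega>" by (simp add: order_le_neq_trans)
  with assms show ?thesis
    using atom_prob_ratio_ge_1[of \<omega> A B] by simp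
qed simp

lemma entropy_le_entropy_pair: "entropy \<Omega> p A \<le> entropy \<Omega> p (\<lambda>\<omega>. (A \<omega>, B \<omega>))"
proof -
  have "0 \<le> (\<Sum>\<omega>\<in>\<Omega>. p \<omega> * log 2 (atom_prob \<Omega> p A \<omega> / atom_prob \<Omega> p (\<lambda>\<omega>. (A \<omega>, B \<omega>)) \<omega>))"
    by (intro sum_nonneg pmf_log_atom_prob_ratio_nonneg)
  then show ?thesis
    using entropy_pair_minus_entropy[of A B] by linarith
qed

lemma atom_prob_pair_eq_of_entropy_eq:
  assumes "entropy \<Omega> p (\<lambda>\<omega>. (A \<omega>, B \<omega>)) = entropy \<Omega> p A" and \<omega>: "\<omega> \<in> \<Omega>" "0 < p \<omega>"
  shows "atom_prob \<Omega> p (\<lambda>\<omega>. (A \<omega>, B \<omega>)) \<omega> = atom_prob \<Omega> p A \<omega>"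
proof -
  let ?\<rho> = "atom_prob \<Omega> p A \<omega> / atom_prob \<Omega> p (\<lambda>\<omega>. (A \<omega>, B \<omega>)) \<omega>"
  have "(\<Sum>\<omega>\<in>\<Omega>. p \<omega> * log 2 (atom_prob \<Omega> p A \<omega> / atom_prob \<Omega> p (\<lambda>\<omega>. (A \<omega>, B \<omega>)) \<omega>)) = 0"
    using assms(1) entropy_pair_minus_entropy[of A B] by simp
  then have "p \<omega> * log 2 ?\<rho> = 0"
    using \<omega>(1) by (subst (asm) sum_nonneg_eq_0_iff[OF finite_space])
      (auto intro: pmf_log_atom_prob_ratio_nonneg)
  then have "log 2 ?\<rho> \<le> 0" using \<omega>(2) by simp
  then have "?\<rho> = 1"
    using atom_prob_ratio_ge_1[OF \<omega>, of A B] by simp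
  then show ?thesis
    using atom_prob_pos[OF \<omega>, of "\<lambda>\<omega>. (A \<omega>, B \<omega>)"] by simp
qed

lemma sum_pmf_log_nonpos:
  assumes pos: "\<And>\<omega>. \<omega> \<in> \<Omega> \<Longrightarrow> 0 < p \<omega> \<Longrightarrow> 0 < r \<omega>" and le: "(\<Sum>\<omega>\<in>\<Omega>. p \<omega> * r \<omega>) \<le> 1"
  shows "(\<Sum>\<omega>\<in>\<Omega>. p \<omega> * log 2 (r \<omega>)) \<le> 0"
    and "(\<Sum>\<omega>\<in>\<Omega>. p \<omega> * log 2 (r \<omega>)) = 0 \<Longrightarrow> \<omega> \<in> \<Omega> \<Longrightarrow> 0 < p \<omega> \<Longrightarrow> r \<omega> = 1"
proof -
  define g where "g \<omega> = p \<omega> * ((r \<omega> - 1) / ln 2 - log 2 (r \<omega>))" for \<omega>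
  have g_nonneg: "0 \<le> g \<omega>" if "\<omega> \<in> \<Omega>" for \<omega>
  proof (cases "p \<omega> = 0")
    case False
    with that pmf_nonneg have "0 < p \<omega>" by (simp add: order_le_neq_trans)
    moreover have "log 2 (r \<omega>) \<le> (r \<omega> - 1) / ln 2"
      using ln_le_minus_one[OF pos[OF that \<open>0 < p \<omega>\<close>]] by (simp add: log_def divide_right_mono)
    ultimately show ?thesis by (simp add: g_def)
  qed (simp add: g_def)
  have sum_g: "(\<Sum>\<omega>\<in>\<Omega>. g \<omega>) = ((\<Sum>\<omega>\<in>\<Omega>. p \<omega> * r \<omega>) - 1) / ln 2 - (\<Sum>\<omega>\<in>\<Omega>. p \<omega> * log 2 (r \<omega>))"
    unfolding g_def using sum_pmf
    by (simp add: algebra_simps sum_subtractf sum.distrib diff_divide_distrib sum_divide_distrib[symmetric])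
  have slack: "((\<Sum>\<omega>\<in>\<Omega>. p \<omega> * r \<omega>) - 1) / ln 2 \<le> 0"
    using le by (simp add: divide_nonpos_pos)
  have sum_g_nonneg: "0 \<le> (\<Sum>\<omega>\<in>\<Omega>. g \<omega>)"
    using g_nonneg by (simp add: sum_nonneg)
  show "(\<Sum>\<omega>\<in>\<Omega>. p \<omega> * log 2 (r \<omega>)) \<le> 0"
    using sum_g slack sum_g_nonneg by linarith
  assume "(\<Sum>\<omega>\<in>\<Omega>. p \<omega> * log 2 (r \<omega>)) = 0" and \<omega>: "\<omega> \<in> \<Omega>" "0 < p \<omega>"
  with sum_g slack sum_g_nonneg have "(\<Sum>\<omega>\<in>\<Omega>. g \<omega>) = 0" by linarith
  then have "g \<omega> = 0"
    using sum_nonneg_eq_0_iff[OF finite_space, of g] g_nonneg \<omega>(1) by blast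
  then have "ln (r \<omega>) = r \<omega> - 1"
    using \<omega>(2) by (simp add: g_def log_def divide_cancel_right)
  then show "r \<omega> = 1"
    using ln_eq_minus_one pos[OF \<omega>] by blast
qed

lemma sum_pmf_atom_prob_ratio_le_2:
  fixes B :: "'o \<Rightarrow> bool"
  shows "(\<Sum>\<omega>\<in>\<Omega>. p \<omega> * (atom_prob \<Omega> p A \<omega> / atom_prob \<Omega> p (\<lambda>\<omega>. (A \<omega>, B \<omega>)) \<omega>)) \<le> 2"
proof -
  let ?PA = "atom_prob \<Omega> p A" and ?PAB = "atom_prob \<Omega> p (\<lambda>\<omega>. (A \<omega>, B \<omega>))"
  define Q where "Q \<omega> = (\<Sum>\<omega>'\<in>{\<omega>'\<in>\<Omega>. A \<omega>' = A \<omega> \<and> B \<omega>' \<noteq> B \<omega>}. p \<omega>')" for \<omega>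
  have PA_split: "?PA \<omega> = ?PAB \<omega> + Q \<omega>" for \<omega>
  proof -
    have "{\<omega>'\<in>\<Omega>. A \<omega>' = A \<omega>}
        = {\<omega>'\<in>\<Omega>. (A \<omega>', B \<omega>') = (A \<omega>, B \<omega>)} \<union> {\<omega>'\<in>\<Omega>. A \<omega>' = A \<omega> \<and> B \<omega>' \<noteq> B \<omega>}"
      by auto
    then show ?thesis
      unfolding atom_prob_def Q_def using finite_space
      by (simp add: sum.union_disjoint[symmetric] disjoint_iff)
  qed
  have "p \<omega> * (?PA \<omega> / ?PAB \<omega>) = p \<omega> + p \<omega> * Q \<omega> / ?PAB \<omega>" if "\<omega> \<in> \<Omega>" for \<omega>
  proof (cases "p \<omega> = 0")
    case False
    with that pmf_nonneg have "0 < p \<omega>" by (simp add: order_le_neq_trans)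
    with that have "0 < ?PAB \<omega>" by (rule atom_prob_pos)
    then show ?thesis unfolding PA_split by (simp add: field_simps)
  qed simp
  then have ratio_sum: "(\<Sum>\<omega>\<in>\<Omega>. p \<omega> * (?PA \<omega> / ?PAB \<omega>)) = 1 + (\<Sum>\<omega>\<in>\<Omega>. p \<omega> * Q \<omega> / ?PAB \<omega>)"
    using sum_pmf by (simp add: sum.distrib)
  \<comment> \<open>B is boolean, so the part of the A-atom of \<omega>' where B differs is a single atom of (A, B).\<close>
  have opposite_atom: "(\<Sum>\<omega>\<in>{\<omega>\<in>\<Omega>. A \<omega> = A \<omega>' \<and> B \<omega> \<noteq> B \<omega>'}. p \<omega> / ?PAB \<omega>) \<le> 1" for \<omega>'
  proof -
    have "{\<omega>\<in>\<Omega>. A \<omega> = A \<omega>' \<and> B \<omega> \<noteq> B \<omega>'} = {\<omega>\<in>\<Omega>. (A \<omega>, B \<omega>) = (A \<omega>', \<not> B \<omega>')}"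
      by auto
    then show ?thesis
      using sum_atom_div_atom_prob_le_1[where C="\<lambda>\<omega>. (A \<omega>, B \<omega>)" and c="(A \<omega>', \<not> B \<omega>')"] by simp
  qed
  have "(\<Sum>\<omega>\<in>\<Omega>. p \<omega> * Q \<omega> / ?PAB \<omega>)
      = (\<Sum>\<omega>\<in>\<Omega>. \<Sum>\<omega>'\<in>\<Omega>. if A \<omega>' = A \<omega> \<and> B \<omega>' \<noteq> B \<omega> then p \<omega> * p \<omega>' / ?PAB \<omega> else 0)"
    unfolding Q_def using finite_space
    by (intro sum.cong refl) (simp add: sum_distrib_left sum_divide_distrib sum.inter_filter[symmetric])
  also have "\<dots> = (\<Sum>\<omega>'\<in>\<Omega>. \<Sum>\<omega>\<in>\<Omega>. if A \<omega>' = A \<omega> \<and> B \<omega>' \<noteq> B \<omega> then p \<omega> * p \<omega>' / ?PAB \<omega> else 0)"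
    by (rule sum.swap)
  also have "\<dots> = (\<Sum>\<omega>'\<in>\<Omega>. p \<omega>' * (\<Sum>\<omega>\<in>{\<omega>\<in>\<Omega>. A \<omega> = A \<omega>' \<and> B \<omega> \<noteq> B \<omega>'}. p \<omega> / ?PAB \<omega>))"
    using finite_space
    by (intro sum.cong refl) (auto simp: sum_distrib_left sum.inter_filter[symmetric] intro!: sum.cong)
  also have "\<dots> \<le> (\<Sum>\<omega>'\<in>\<Omega>. p \<omega>' * 1)"
    using pmf_nonneg opposite_atom by (intro sum_mono mult_left_mono) auto
  finally have "(\<Sum>\<omega>\<in>\<Omega>. p \<omega> * Q \<omega> / ?PAB \<omega>) \<le> 1"
    using sum_pmf by simp
  with ratio_sum show ?thesis by linarith
qed

lemma entropy_pair_bool_minus_1: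
  fixes A :: "'o \<Rightarrow> 'a" and B :: "'o \<Rightarrow> bool"
  defines "r \<equiv> \<lambda>\<omega>. atom_prob \<Omega> p A \<omega> / (2 * atom_prob \<Omega> p (\<lambda>\<omega>. (A \<omega>, B \<omega>)) \<omega>)"
  shows "entropy \<Omega> p (\<lambda>\<omega>. (A \<omega>, B \<omega>)) - entropy \<Omega> p A - 1 = (\<Sum>\<omega>\<in>\<Omega>. p \<omega> * log 2 (r \<omega>))"
    and "\<And>\<omega>. \<omega> \<in> \<Omega> \<Longrightarrow> 0 < p \<omega> \<Longrightarrow> 0 < r \<omega>"
    and "(\<Sum>\<omega>\<in>\<Omega>. p \<omega> * r \<omega>) \<le> 1"
proof -
  let ?PA = "atom_prob \<Omega> p A" and ?PAB = "atom_prob \<Omega> p (\<lambda>\<omega>. (A \<omega>, B \<omega>))"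
  show r_pos: "0 < r \<omega>" if "\<omega> \<in> \<Omega>" "0 < p \<omega>" for \<omega>
    using atom_prob_pos[OF that, of A] atom_prob_pos[OF that, of "\<lambda>\<omega>. (A \<omega>, B \<omega>)"]
    by (simp add: r_def)
  have "(\<Sum>\<omega>\<in>\<Omega>. p \<omega> * log 2 (r \<omega>)) = (\<Sum>\<omega>\<in>\<Omega>. p \<omega> * (log 2 (?PA \<omega> / ?PAB \<omega>) - 1))"
  proof (intro sum_pmf_mult_cong)
    fix \<omega> assume "\<omega> \<in> \<Omega>" "0 < p \<omega>"
    then have "0 < ?PA \<omega>" "0 < ?PAB \<omega>" by (simp_all add: atom_prob_pos)
    then show "log 2 (r \<omega>) = log 2 (?PA \<omega> / ?PAB \<omega>) - 1"
      by (simp add: r_def log_divide log_mult)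
  qed
  then show "entropy \<Omega> p (\<lambda>\<omega>. (A \<omega>, B \<omega>)) - entropy \<Omega> p A - 1 = (\<Sum>\<omega>\<in>\<Omega>. p \<omega> * log 2 (r \<omega>))"
    using entropy_pair_minus_entropy[of A B] sum_pmf by (simp add: right_diff_distrib sum_subtractf)
  have "(\<Sum>\<omega>\<in>\<Omega>. p \<omega> * r \<omega>) = (\<Sum>\<omega>\<in>\<Omega>. p \<omega> * (?PA \<omega> / ?PAB \<omega>)) / 2"
    unfolding r_def sum_divide_distrib by (intro sum.cong) auto
  then show "(\<Sum>\<omega>\<in>\<Omega>. p \<omega> * r \<omega>) \<le> 1"
    using sum_pmf_atom_prob_ratio_le_2[of A B] by simp
qed

lemma entropy_pair_bool_le:
  fixes B :: "'o \<Rightarrow> bool"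
  shows "entropy \<Omega> p (\<lambda>\<omega>. (A \<omega>, B \<omega>)) \<le> entropy \<Omega> p A + 1"
  using entropy_pair_bool_minus_1(1)[where A=A and B=B]
    sum_pmf_log_nonpos(1)[OF entropy_pair_bool_minus_1(2,3)[where A=A and B=B]] by linarith

lemma atom_prob_eq_twice_of_entropy_pair_bool:
  fixes B :: "'o \<Rightarrow> bool"
  assumes "entropy \<Omega> p (\<lambda>\<omega>. (A \<omega>, B \<omega>)) = entropy \<Omega> p A + 1" and \<omega>: "\<omega> \<in> \<Omega>" "0 < p \<omega>"
  shows "atom_prob \<Omega> p A \<omega> = 2 * atom_prob \<Omega> p (\<lambda>\<omega>. (A \<omega>, B \<omega>)) \<omega>"
proof -
  have "atom_prob \<Omega> p A \<omega> / (2 * atom_prob \<Omega> p (\<lambda>\<omega>. (A \<omega>, B \<omega>)) \<omega>) = 1"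
    using sum_pmf_log_nonpos(2)[OF entropy_pair_bool_minus_1(2,3) _ \<omega>]
      entropy_pair_bool_minus_1(1)[where A=A and B=B] assms(1)
    by simp
  then show ?thesis
    using atom_prob_pos[OF \<omega>, of "\<lambda>\<omega>. (A \<omega>, B \<omega>)"] by (simp add: divide_eq_1_iff)
qed

end

section \<open>Parities of finite sets and the Walsh transform\<close>

definition parity_sign :: "'a set \<Rightarrow> real" where
  "parity_sign A = (-1) ^ card A"

lemma parity_sign_cases: "parity_sign A = 1 \<or> parity_sign A = -1"
  unfolding parity_sign_def by (cases "even (card A)") auto

lemma parity_sign_eq_neg1_iff: "parity_sign A = -1 \<longleftrightarrow> odd (card A)"
  unfolding parity_sign_def by (cases "even (card A)") auto

lemma parity_sign_mult_self [simp]: "parity_sign A * parity_sign A = 1"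
  unfolding parity_sign_def by (simp flip: power_add)

lemma parity_sign_empty [simp]: "parity_sign {} = 1"
  by (simp add: parity_sign_def)

lemma parity_sign_singleton [simp]: "parity_sign {j} = -1"
  by (simp add: parity_sign_def)

lemma parity_sign_sym_diff:
  assumes "finite A" and "finite B"
  shows "parity_sign (sym_diff A B) = parity_sign A * parity_sign B"
proof -
  have "card (sym_diff A B) + 2 * card (A \<inter> B) = card A + card B"
  proof -
    have "card (A \<union> B) = card (sym_diff A B) + card (A \<inter> B)"
      using assms by (subst card_Un_disjoint[symmetric]) (auto intro: arg_cong[where f=card])
    then show ?thesis using card_Un_Int[OF assms] by simp
  qed
  then have "(-1::real) ^ (card A + card B) = (-1) ^ card (sym_diff A B) * ((-1) ^ 2) ^ card (A \<inter> B)"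
    by (metis power_add power_mult)
  then show ?thesis unfolding parity_sign_def by (simp add: power_add)
qed

lemma parity_sign_Int_sym_diff:
  assumes "finite C"
  shows "parity_sign (C \<inter> sym_diff T T') = parity_sign (C \<inter> T) * parity_sign (C \<inter> T')"
proof -
  have "C \<inter> sym_diff T T' = sym_diff (C \<inter> T) (C \<inter> T')" by auto
  then show ?thesis using assms by (simp add: parity_sign_sym_diff)
qed

lemma parity_sign_sym_diff_Int:
  assumes "finite T"
  shows "parity_sign (sym_diff a b \<inter> T) = parity_sign (a \<inter> T) * parity_sign (b \<inter> T)"
  using parity_sign_Int_sym_diff[OF assms, of a b] by (simp add: Int_commute)

definition sym_diff_closed :: "'a set set \<Rightarrow> bool" where
  "sym_diff_closed G \<longleftrightarrow> (\<forall>T\<in>G. \<forall>T'\<in>G. sym_diff T T' \<in> G)"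

lemma sym_diff_closed_Pow: "sym_diff_closed (Pow U)"
  unfolding sym_diff_closed_def by auto

lemma sum_parity_sign_Int_eq_0:
  assumes "finite G" and "sym_diff_closed G" and "finite C" and "T\<^sub>0 \<in> G" and "odd (card (C \<inter> T\<^sub>0))"
  shows "(\<Sum>T\<in>G. parity_sign (C \<inter> T)) = 0"
proof -
  have sym_diff_twice: "sym_diff (sym_diff T T\<^sub>0) T\<^sub>0 = T" for T by auto
  have "(\<Sum>T\<in>G. parity_sign (C \<inter> T)) = (\<Sum>T\<in>G. parity_sign (C \<inter> sym_diff T T\<^sub>0))"
    using assms(2,4) sym_diff_twice unfolding sym_diff_closed_def
    by (intro sum.reindex_bij_witness[where i="\<lambda>T. sym_diff T T\<^sub>0" and j="\<lambda>T. sym_diff T T\<^sub>0"]) auto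
  also have "\<dots> = - (\<Sum>T\<in>G. parity_sign (C \<inter> T))"
    using assms(3,5) by (simp add: parity_sign_Int_sym_diff parity_sign_eq_neg1_iff[symmetric] sum_negf)
  finally show ?thesis by simp
qed

lemma sum_parity_sign_Int_cases:
  assumes "finite G" and "sym_diff_closed G" and "finite C"
  shows "(\<Sum>T\<in>G. parity_sign (C \<inter> T)) = 0 \<or> (\<Sum>T\<in>G. parity_sign (C \<inter> T)) = card G"
proof (cases "\<exists>T\<^sub>0\<in>G. odd (card (C \<inter> T\<^sub>0))")
  case True
  then show ?thesis using sum_parity_sign_Int_eq_0[OF assms] by blast
next
  case False
  then have "parity_sign (C \<inter> T) = 1" if "T \<in> G" for T
    using that parity_sign_cases parity_sign_eq_neg1_iff by blast
  then show ?thesis by simp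
qed

lemma sum_Pow_parity_sign_Int:
  assumes "finite U" and "C \<subseteq> U"
  shows "(\<Sum>T\<in>Pow U. parity_sign (C \<inter> T)) = (if C = {} then 2 ^ card U else 0)"
proof (cases "C = {}")
  case False
  then obtain j where j: "j \<in> C" by blast
  have "(\<Sum>T\<in>Pow U. parity_sign (C \<inter> T)) = 0"
  proof (rule sum_parity_sign_Int_eq_0)
    show "finite (Pow U)" "finite C"
      using assms finite_subset by auto
    show "{j} \<in> Pow U" "odd (card (C \<inter> {j}))"
      using j assms(2) by auto
  qed (rule sym_diff_closed_Pow)
  with False show ?thesis by simp
qed (simp add: card_Pow assms(1))

lemma sum_Pow_parity_sign_Int_mult:
  assumes "finite U" and "a \<subseteq> U" and "b \<subseteq> U"
  shows "(\<Sum>T\<in>Pow U. parity_sign (a \<inter> T) * parity_sign (b \<inter> T)) = (if a = b then 2 ^ card U else 0)"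
proof -
  have "(\<Sum>T\<in>Pow U. parity_sign (a \<inter> T) * parity_sign (b \<inter> T)) = (\<Sum>T\<in>Pow U. parity_sign (sym_diff a b \<inter> T))"
    using assms(1) by (intro sum.cong refl) (simp add: parity_sign_sym_diff_Int finite_subset)
  also have "\<dots> = (if a = b then 2 ^ card U else 0)"
    using assms by (subst sum_Pow_parity_sign_Int) auto
  finally show ?thesis .
qed

lemma card_sym_diff_closed_eq_pow2:
  assumes "finite U" and "G \<subseteq> Pow U" and "{} \<in> G" and "sym_diff_closed G"
  shows "\<exists>k. card G = 2 ^ k"
proof -
  have fin_G: "finite G" using assms(1,2) finite_subset by blast
  define K where "K = {a\<in>Pow U. (\<Sum>T\<in>G. parity_sign (a \<inter> T)) = card G}"
  have "(\<Sum>a\<in>Pow U. \<Sum>T\<in>G. parity_sign (a \<inter> T)) = (\<Sum>T\<in>G. \<Sum>a\<in>Pow U. parity_sign (T \<inter> a))"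
    by (subst sum.swap) (simp add: Int_commute)
  also have "\<dots> = (\<Sum>T\<in>G. if T = {} then 2 ^ card U else 0)"
    using assms(1,2) by (intro sum.cong refl sum_Pow_parity_sign_Int) auto
  also have "\<dots> = 2 ^ card U"
    using fin_G assms(3) by (simp add: sum.delta)
  finally have "2 ^ card U = (\<Sum>a\<in>Pow U. \<Sum>T\<in>G. parity_sign (a \<inter> T))" by simp
  also have "\<dots> = (\<Sum>a\<in>K. real (card G))"
    unfolding K_def using assms(1) sum_parity_sign_Int_cases[OF fin_G assms(4)]
    by (intro sum.mono_neutral_cong_right) (auto dest: finite_subset)
  finally have "card K * card G = (2::nat) ^ card U"
    by (simp flip: of_nat_mult of_nat_eq_iff)
  then have "card G dvd 2 ^ card U" by (metis dvd_triv_right)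
  then show ?thesis by (auto simp: divides_primepow_nat)
qed

definition walsh :: "'a set \<Rightarrow> ('a set \<Rightarrow> real) \<Rightarrow> 'a set \<Rightarrow> real" where
  "walsh U f T = (\<Sum>a\<in>Pow U. f a * parity_sign (a \<inter> T))"

lemma walsh_empty: "walsh U f {} = (\<Sum>a\<in>Pow U. f a)"
  by (simp add: walsh_def)

lemma walsh_parseval:
  assumes "finite U"
  shows "(\<Sum>T\<in>Pow U. (walsh U f T)\<^sup>2) = 2 ^ card U * (\<Sum>a\<in>Pow U. (f a)\<^sup>2)"
proof -
  have "(\<Sum>T\<in>Pow U. (walsh U f T)\<^sup>2)
      = (\<Sum>T\<in>Pow U. \<Sum>a\<in>Pow U. \<Sum>b\<in>Pow U. f a * f b * (parity_sign (a \<inter> T) * parity_sign (b \<inter> T)))"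
    unfolding walsh_def power2_eq_square sum_product by (intro sum.cong refl) (simp add: mult_ac)
  also have "\<dots> = (\<Sum>a\<in>Pow U. \<Sum>T\<in>Pow U. \<Sum>b\<in>Pow U. f a * f b * (parity_sign (a \<inter> T) * parity_sign (b \<inter> T)))"
    by (rule sum.swap)
  also have "\<dots> = (\<Sum>a\<in>Pow U. \<Sum>b\<in>Pow U. f a * f b * (\<Sum>T\<in>Pow U. parity_sign (a \<inter> T) * parity_sign (b \<inter> T)))"
    by (rule sum.cong[OF refl], subst sum.swap) (simp add: sum_distrib_left)
  also have "\<dots> = (\<Sum>a\<in>Pow U. \<Sum>b\<in>Pow U. if a = b then f a * f a * 2 ^ card U else 0)"
    using assms by (intro sum.cong refl) (simp add: sum_Pow_parity_sign_Int_mult)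
  also have "\<dots> = 2 ^ card U * (\<Sum>a\<in>Pow U. (f a)\<^sup>2)"
    using assms by (simp add: sum.delta sum_distrib_left power2_eq_square mult_ac)
  finally show ?thesis .
qed

lemma walsh_inversion:
  assumes "finite U" and "a \<subseteq> U"
  shows "(\<Sum>T\<in>Pow U. parity_sign (a \<inter> T) * walsh U f T) = 2 ^ card U * f a"
proof -
  have "(\<Sum>T\<in>Pow U. parity_sign (a \<inter> T) * walsh U f T)
      = (\<Sum>b\<in>Pow U. f b * (\<Sum>T\<in>Pow U. parity_sign (a \<inter> T) * parity_sign (b \<inter> T)))"
    unfolding walsh_def sum_distrib_left by (subst sum.swap) (simp add: mult_ac)
  also have "\<dots> = (\<Sum>b\<in>Pow U. if a = b then f b * 2 ^ card U else 0)"
    using assms by (intro sum.cong refl) (simp add: sum_Pow_parity_sign_Int_mult)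
  also have "\<dots> = 2 ^ card U * f a"
    using assms by (simp add: sum.delta)
  finally show ?thesis .
qed

definition marginal :: "'a set \<Rightarrow> 'a set \<Rightarrow> ('a set \<Rightarrow> real) \<Rightarrow> 'a set \<Rightarrow> real" where
  "marginal E U f a = (\<Sum>x\<in>{x\<in>Pow E. x \<inter> U = a}. f x)"

lemma sum_marginal:
  assumes "finite E" and "U \<subseteq> E"
  shows "(\<Sum>a\<in>Pow U. marginal E U f a) = (\<Sum>x\<in>Pow E. f x)"
  unfolding marginal_def using assms finite_subset by (intro sum.group) auto

lemma walsh_marginal:
  assumes "finite E" and "U \<subseteq> E" and "T \<subseteq> U"
  shows "walsh U (marginal E U f) T = walsh E f T"
proof -
  have "walsh U (marginal E U f) T = (\<Sum>a\<in>Pow U. \<Sum>x\<in>{x\<in>Pow E. x \<inter> U = a}. f x * parity_sign (x \<inter> T))"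
    unfolding walsh_def marginal_def sum_distrib_right
  proof (intro sum.cong refl)
    fix a x assume "x \<in> {x\<in>Pow E. x \<inter> U = a}"
    then have "a \<inter> T = x \<inter> T" using assms(3) by auto
    then show "f x * parity_sign (a \<inter> T) = f x * parity_sign (x \<inter> T)" by simp
  qed
  also have "\<dots> = walsh E f T"
    unfolding walsh_def using assms(1,2) finite_subset by (intro sum.group) auto
  finally show ?thesis .
qed

lemma ex_ne_0_of_marginal_ne_0:
  assumes "marginal E U f a \<noteq> 0"
  shows "\<exists>x\<in>Pow E. x \<inter> U = a \<and> f x \<noteq> 0"
proof (rule ccontr)
  assume "\<not> ?thesis"
  then have "marginal E U f a = (\<Sum>x\<in>{x\<in>Pow E. x \<inter> U = a}. 0)"
    unfolding marginal_def by (intro sum.cong) auto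
  with assms show False by simp
qed

lemma marginal_empty: "marginal E {} f a = (if a = {} then (\<Sum>x\<in>Pow E. f x) else 0)"
  unfolding marginal_def by (auto simp: Pow_def)

lemma eq_of_sum_Pow_eq:
  fixes f g :: "'a set \<Rightarrow> real"
  assumes "finite E" and "\<And>U. U \<subseteq> E \<Longrightarrow> (\<Sum>T\<in>Pow U. f T) = (\<Sum>T\<in>Pow U. g T)" and "T \<subseteq> E"
  shows "f T = g T"
  using assms(3)
proof (induction "card T" arbitrary: T rule: less_induct)
  case less
  have fin_T: "finite T" using less.prems assms(1) finite_subset by blast
  have "(\<Sum>T'\<in>Pow T - {T}. f T') = (\<Sum>T'\<in>Pow T - {T}. g T')"
  proof (intro sum.cong refl)
    fix T' assume "T' \<in> Pow T - {T}"
    then have "T' \<subset> T" by auto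
    with fin_T less show "f T' = g T'" by (meson psubset_card_mono psubset_imp_subset subset_trans)
  qed
  moreover have "(\<Sum>T'\<in>Pow T. h T') = h T + (\<Sum>T'\<in>Pow T - {T}. h T')" for h :: "'a set \<Rightarrow> real"
    using fin_T by (subst sum.remove[of _ T]) auto
  ultimately show ?case using assms(2)[OF less.prems] by simp
qed

lemma Ints_of_sum_Pow_Ints:
  fixes f :: "'a set \<Rightarrow> real"
  assumes "finite E" and "\<And>U. U \<subseteq> E \<Longrightarrow> (\<Sum>T\<in>Pow U. f T) \<in> \<int>" and "T \<subseteq> E"
  shows "f T \<in> \<int>"
  using assms(3)
proof (induction "card T" arbitrary: T rule: less_induct)
  case less
  have fin_T: "finite T" using less.prems assms(1) finite_subset by blast
  have "(\<Sum>T'\<in>Pow T - {T}. f T') \<in> \<int>"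
  proof (intro Ints_sum)
    fix T' assume "T' \<in> Pow T - {T}"
    then have "T' \<subset> T" by auto
    with fin_T less show "f T' \<in> \<int>" by (meson psubset_card_mono psubset_imp_subset subset_trans)
  qed
  moreover have "(\<Sum>T'\<in>Pow T. f T') = f T + (\<Sum>T'\<in>Pow T - {T}. f T')"
    using fin_T by (subst sum.remove[of _ T]) auto
  ultimately show ?case
    using assms(2)[OF less.prems] by (metis Ints_diff add_diff_cancel_right')
qed

lemma card_Pow_Int_eq:
  assumes "finite E" and "S \<subseteq> E" and "a \<subseteq> S"
  shows "card {x\<in>Pow E. x \<inter> S = a} = 2 ^ (card E - card S)"
proof -
  have "bij_betw (\<lambda>z. z \<union> a) (Pow (E - S)) {x\<in>Pow E. x \<inter> S = a}"
    by (rule bij_betw_byWitness[where f'="\<lambda>x. x - S"]) (use assms in auto)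
  then have "card {x\<in>Pow E. x \<inter> S = a} = card (Pow (E - S))"
    by (simp add: bij_betw_same_card)
  also have "\<dots> = 2 ^ (card E - card S)"
    using assms by (simp add: card_Pow card_Diff_subset finite_subset)
  finally show ?thesis .
qed

lemma card_Pow_parity_eq:
  assumes "finite E" and "S \<subseteq> E" and "S \<noteq> {}"
  shows "card {x\<in>Pow E. odd (card (x \<inter> S)) = b} = 2 ^ (card E - 1)"
proof -
  obtain j where j: "j \<in> S" using assms(3) by blast
  let ?C = "\<lambda>b. {x\<in>Pow E. odd (card (x \<inter> S)) = b}"
  have flip: "odd (card (sym_diff x {j} \<inter> S)) \<longleftrightarrow> \<not> odd (card (x \<inter> S))" if "x \<subseteq> E" for x
  proof -
    have "finite S" using assms finite_subset by blast
    then have "parity_sign (S \<inter> sym_diff x {j}) = - parity_sign (S \<inter> x)"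
      using j by (simp add: parity_sign_Int_sym_diff parity_sign_eq_neg1_iff)
    then show ?thesis
      using parity_sign_cases[of "S \<inter> x"] by (auto simp: parity_sign_eq_neg1_iff[symmetric] Int_commute)
  qed
  have "bij_betw (\<lambda>x. sym_diff x {j}) (?C c) (?C (\<not> c))" for c
    by (rule bij_betw_byWitness[where f'="\<lambda>x. sym_diff x {j}"]) (use j assms(2) flip in auto)
  then have same_card: "card (?C b) = card (?C (\<not> b))"
    using bij_betw_same_card by blast
  have "card (?C b) + card (?C (\<not> b)) = card (Pow E)"
    using assms(1) by (subst card_Un_disjoint[symmetric]) (auto intro: arg_cong[where f=card])
  then have "2 * card (?C b) = 2 ^ card E"
    using same_card assms(1) by (simp add: card_Pow)
  moreover have "card E \<noteq> 0"
    using assms j by (auto simp: card_eq_0_iff)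
  ultimately show ?thesis
    by (metis (no_types) power_eq_if mult_left_cancel zero_neq_numeral)
qed

lemma Ints_zero_or_one:
  assumes "(d::real) \<in> \<int>" and "0 \<le> d" and "d \<le> 1"
  shows "d = 0 \<or> d = 1"
proof -
  obtain k where "d = of_int k" using assms(1) by (rule Ints_cases)
  with assms(2,3) show ?thesis by auto
qed

lemma two_powr_Ints:
  assumes "(k::real) \<in> \<int>" and "1 \<le> 2 powr k"
  shows "2 powr k \<in> \<int>"
proof -
  obtain n where n: "k = of_int n" using assms(1) by (rule Ints_cases)
  have "0 \<le> n"
  proof (rule ccontr)
    assume "\<not> 0 \<le> n"
    then have "2 powr k < 1" using n by (simp add: powr_less_one)
    with assms(2) show False by simp
  qed
  with n have "2 powr k = 2 ^ nat n"
    by (simp add: powr_realpow[symmetric])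
  then show ?thesis by simp
qed

section \<open>The multiple access channel with uniform inputs\<close>

lemma finite_users [simp]: "finite (users m)"
  by (simp add: users_def)

lemma card_users [simp]: "card (users m) = m"
  by (simp add: users_def)

lemma binary_mac_nonneg: "binary_mac m W \<Longrightarrow> x \<subseteq> users m \<Longrightarrow> 0 \<le> W x y"
  by (simp add: binary_mac_def inputs_def)

lemma sum_mac_space:
  "(\<Sum>\<omega>\<in>mac_space m. f \<omega>) = (\<Sum>x\<in>Pow (users m). \<Sum>y\<in>(UNIV :: 'b::finite set). f (x, y))"
  unfolding mac_space_def inputs_def by (simp add: sum.cartesian_product)

lemma finite_pmf_mac:
  assumes "binary_mac m (W :: nat set \<Rightarrow> 'b::finite \<Rightarrow> real)"
  shows "finite_pmf (mac_space m) (mac_pmf m W)"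
proof
  show "finite (mac_space m :: (nat set \<times> 'b) set)"
    by (simp add: mac_space_def inputs_def)
  show "0 \<le> mac_pmf m W \<omega>" if "\<omega> \<in> mac_space m" for \<omega>
    using that assms by (auto simp: mac_space_def inputs_def mac_pmf_def binary_mac_nonneg)
  have "(\<Sum>\<omega>\<in>mac_space m. mac_pmf m W \<omega>) = (\<Sum>x\<in>Pow (users m). (\<Sum>y\<in>UNIV. W x y) / 2 ^ m)"
    unfolding sum_mac_space mac_pmf_def by (simp add: sum_divide_distrib)
  also have "\<dots> = (\<Sum>x\<in>Pow (users m). 1 / 2 ^ m)"
    using assms unfolding binary_mac_def inputs_def by (intro sum.cong) auto
  finally show "(\<Sum>\<omega>\<in>mac_space m. mac_pmf m W \<omega>) = 1"
    by (simp add: card_Pow)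
qed

lemma mem_mac_space: "x \<subseteq> users m \<Longrightarrow> (x, y) \<in> mac_space m"
  by (simp add: mac_space_def inputs_def)

lemma mac_pmf_pos: "binary_mac m W \<Longrightarrow> x \<subseteq> users m \<Longrightarrow> W x y \<noteq> 0 \<Longrightarrow> 0 < mac_pmf m W (x, y)"
  using binary_mac_nonneg[of m W x y] by (simp add: mac_pmf_def order_le_neq_trans)

lemma mac_pmf_pos_cases:
  assumes "\<omega> \<in> mac_space m" and "0 < mac_pmf m W \<omega>"
  obtains x y where "\<omega> = (x, y)" and "x \<subseteq> users m" and "W x y \<noteq> 0"
proof -
  obtain x y where \<omega>: "\<omega> = (x, y)" by (cases \<omega>)
  with assms have "x \<subseteq> users m" "W x y \<noteq> 0"
    by (auto simp: mac_space_def inputs_def mac_pmf_def)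
  with \<omega> show thesis by (rule that)
qed

lemma atom_prob_mac_output:
  assumes "x \<subseteq> users m"
  shows "atom_prob (mac_space m) (mac_pmf m W) (\<lambda>(x, y). (y, f x)) (x, y)
       = (\<Sum>x'\<in>{x'\<in>Pow (users m). f x' = f x}. W x' y) / 2 ^ m"
proof -
  have "{\<omega>\<in>mac_space m. (\<lambda>(x', y'). (y', f x')) \<omega> = (y, f x)} = (\<lambda>x'. (x', y)) ` {x'\<in>Pow (users m). f x' = f x}"
    unfolding mac_space_def inputs_def by auto
  then show ?thesis
    unfolding atom_prob_def by (simp add: sum.reindex inj_on_def mac_pmf_def sum_divide_distrib)
qed

lemma atom_prob_mac_input:
  assumes "binary_mac m (W :: nat set \<Rightarrow> 'b::finite \<Rightarrow> real)" and "x \<subseteq> users m"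
  shows "atom_prob (mac_space m) (mac_pmf m W) (\<lambda>(x, y). f x) (x, y)
       = card {x'\<in>Pow (users m). f x' = f x} / 2 ^ m"
proof -
  have "{\<omega>\<in>mac_space m. (\<lambda>(x', y'). f x') \<omega> = f x} = {x'\<in>Pow (users m). f x' = f x} \<times> (UNIV :: 'b set)"
    unfolding mac_space_def inputs_def by auto
  then have "atom_prob (mac_space m) (mac_pmf m W) (\<lambda>(x, y). f x) (x, y)
      = (\<Sum>x'\<in>{x'\<in>Pow (users m). f x' = f x}. (\<Sum>y\<in>UNIV. W x' y) / 2 ^ m)"
    unfolding atom_prob_def by (simp add: sum.cartesian_product[symmetric] mac_pmf_def sum_divide_distrib)
  also have "\<dots> = (\<Sum>x'\<in>{x'\<in>Pow (users m). f x' = f x}. 1 / 2 ^ m)"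
    using assms(1) unfolding binary_mac_def inputs_def by (intro sum.cong) auto
  finally show ?thesis by simp
qed

lemma entropy_mac_input:
  assumes "binary_mac m (W :: nat set \<Rightarrow> 'b::finite \<Rightarrow> real)"
    and "\<And>x. x \<subseteq> users m \<Longrightarrow> card {x'\<in>Pow (users m). f x' = f x} = 2 ^ (m - k)" and "k \<le> m"
  shows "entropy (mac_space m) (mac_pmf m W) (\<lambda>(x, y). f x) = k"
proof -
  interpret finite_pmf "mac_space m" "mac_pmf m W" using assms(1) by (rule finite_pmf_mac)
  have "entropy (mac_space m) (mac_pmf m W) (\<lambda>(x, y). f x) = - log 2 (2 ^ (m - k) / 2 ^ m)"
  proof (intro entropy_const_atom_prob)
    fix \<omega> :: "nat set \<times> 'b" assume "\<omega> \<in> mac_space m"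
    then obtain x y where \<omega>: "\<omega> = (x, y)" and x: "x \<subseteq> users m"
      by (auto simp: mac_space_def inputs_def)
    show "atom_prob (mac_space m) (mac_pmf m W) (\<lambda>(x, y). f x) \<omega> = 2 ^ (m - k) / 2 ^ m"
      unfolding \<omega> atom_prob_mac_input[OF assms(1) x] assms(2)[OF x] by simp
  qed simp
  also have "\<dots> = k"
    using assms(3) by (simp add: log_divide of_nat_diff)
  finally show ?thesis .
qed

definition output_weight :: "nat \<Rightarrow> (nat set \<Rightarrow> 'b::finite \<Rightarrow> real) \<Rightarrow> 'b \<Rightarrow> real" where
  "output_weight m W y = (\<Sum>x\<in>Pow (users m). W x y)"

definition post_entropy :: "nat \<Rightarrow> (nat set \<Rightarrow> 'b::finite \<Rightarrow> real) \<Rightarrow> nat set \<Rightarrow> real" where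
  "post_entropy m W U = entropy (mac_space m) (mac_pmf m W) (\<lambda>(x, y). (y, x \<inter> U))
     - entropy (mac_space m) (mac_pmf m W) (\<lambda>(x, y). y)"

lemma post_entropy_empty [simp]: "post_entropy m W {} = 0"
  unfolding post_entropy_def by (subst entropy_cong[where B="\<lambda>(x, y). y"]) auto

lemma cond_mi_eq_post_entropy:
  assumes "binary_mac m (W :: nat set \<Rightarrow> 'b::finite \<Rightarrow> real)" and "S \<subseteq> users m"
  shows "cond_mi m W S = card S + post_entropy m W (users m - S) - post_entropy m W (users m)"
proof -
  interpret finite_pmf "mac_space m" "mac_pmf m W" using assms(1) by (rule finite_pmf_mac)
  have "entropy (mac_space m) (mac_pmf m W) (\<lambda>(x, y). x \<inter> S) = card S"
    using assms card_Pow_Int_eq[of "users m" S] card_mono[OF finite_users assms(2)]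
    by (intro entropy_mac_input) auto
  moreover have "entropy (mac_space m) (mac_pmf m W) (\<lambda>\<omega>. ((\<lambda>(x, y). x \<inter> S) \<omega>, (\<lambda>(x, y). (y, x \<inter> (users m - S))) \<omega>))
      = entropy (mac_space m) (mac_pmf m W) (\<lambda>(x, y). (y, x \<inter> users m))"
    by (rule entropy_cong) (auto simp: mac_space_def inputs_def)
  ultimately show ?thesis
    unfolding cond_mi_def mutual_info_eq_entropy post_entropy_def by simp
qed

lemma post_entropy_eq_cond_mi:
  assumes "binary_mac m (W :: nat set \<Rightarrow> 'b::finite \<Rightarrow> real)" and "U \<subseteq> users m"
  shows "post_entropy m W U = cond_mi m W (users m - U) - card (users m - U) - cond_mi m W (users m) + m"
  using cond_mi_eq_post_entropy[OF assms(1), of "users m - U"] cond_mi_eq_post_entropy[OF assms(1), of "users m"]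
    assms(2) by (simp add: double_diff)

lemma post_entropy_Ints_of_cond_mi_Ints:
  assumes "binary_mac m (W :: nat set \<Rightarrow> 'b::finite \<Rightarrow> real)" and "\<forall>S\<subseteq>users m. cond_mi m W S \<in> \<int>"
  shows "\<forall>U\<subseteq>users m. post_entropy m W U \<in> \<int>"
  using assms by (simp add: post_entropy_eq_cond_mi Ints_add Ints_diff)

lemma lin_mi_empty [simp]:
  assumes "binary_mac m (W :: nat set \<Rightarrow> 'b::finite \<Rightarrow> real)"
  shows "lin_mi m W {} = 0"
proof -
  interpret finite_pmf "mac_space m" "mac_pmf m W" using assms(1) by (rule finite_pmf_mac)
  have "entropy (mac_space m) (mac_pmf m W) (\<lambda>(x, y). odd (card (x \<inter> {}))) = 0"
    using entropy_mac_input[OF assms, where f="\<lambda>x. odd (card (x \<inter> {}))" and k=0]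
    by (simp add: card_Pow flip: Pow_def)
  moreover have "entropy (mac_space m) (mac_pmf m W) (\<lambda>\<omega>. ((\<lambda>(x, y). odd (card (x \<inter> {}))) \<omega>, (\<lambda>(x, y). y) \<omega>))
      = entropy (mac_space m) (mac_pmf m W) (\<lambda>(x, y). y)"
    by (rule entropy_cong) auto
  ultimately show ?thesis
    unfolding lin_mi_def mutual_info_eq_entropy by simp
qed

lemma lin_mi_eq_entropy:
  assumes "binary_mac m (W :: nat set \<Rightarrow> 'b::finite \<Rightarrow> real)" and "S \<subseteq> users m" and "S \<noteq> {}"
  shows "lin_mi m W S = 1 + entropy (mac_space m) (mac_pmf m W) (\<lambda>(x, y). y)
     - entropy (mac_space m) (mac_pmf m W) (\<lambda>(x, y). (y, odd (card (x \<inter> S))))"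
proof -
  interpret finite_pmf "mac_space m" "mac_pmf m W" using assms(1) by (rule finite_pmf_mac)
  obtain j where "j \<in> S" using assms(3) by blast
  with assms(2) have "1 \<le> m" by (auto simp: users_def)
  have "entropy (mac_space m) (mac_pmf m W) (\<lambda>(x, y). odd (card (x \<inter> S))) = real 1"
  proof (rule entropy_mac_input[OF assms(1)])
    show "card {x'\<in>Pow (users m). odd (card (x' \<inter> S)) = odd (card (x \<inter> S))} = 2 ^ (m - 1)" for x
      using card_Pow_parity_eq[OF finite_users assms(2,3)] by (simp only: card_users)
  qed fact
  moreover have "entropy (mac_space m) (mac_pmf m W) (\<lambda>\<omega>. ((\<lambda>(x, y). odd (card (x \<inter> S))) \<omega>, (\<lambda>(x, y). y) \<omega>))
      = entropy (mac_space m) (mac_pmf m W) (\<lambda>(x, y). (y, odd (card (x \<inter> S))))"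
    by (rule entropy_cong) auto
  ultimately show ?thesis
    unfolding lin_mi_def mutual_info_eq_entropy by simp
qed

lemma atom_prob_mac_restrict:
  assumes "x \<subseteq> users m"
  shows "atom_prob (mac_space m) (mac_pmf m W) (\<lambda>(x, y). (y, x \<inter> U)) (x, y)
       = marginal (users m) U (\<lambda>x. W x y) (x \<inter> U) / 2 ^ m"
  using atom_prob_mac_output[OF assms, of W "\<lambda>x. x \<inter> U" y] by (simp add: marginal_def)

lemma atom_prob_mac_output_only:
  assumes "x \<subseteq> users m"
  shows "atom_prob (mac_space m) (mac_pmf m W) (\<lambda>(x, y). y) (x, y) = output_weight m W y / 2 ^ m"
proof -
  have "atom_prob (mac_space m) (mac_pmf m W) (\<lambda>(x, y). y) (x, y)
      = atom_prob (mac_space m) (mac_pmf m W) (\<lambda>(x, y). (y, ())) (x, y)"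
    using assms by (intro atom_prob_cong) (auto simp: mac_space_def inputs_def)
  then show ?thesis
    using atom_prob_mac_output[OF assms, of W "\<lambda>_. ()" y] by (simp add: output_weight_def Pow_def)
qed

lemma atom_prob_mac_parity:
  assumes "x \<subseteq> users m"
  shows "2 * atom_prob (mac_space m) (mac_pmf m W) (\<lambda>(x, y). (y, odd (card (x \<inter> S)))) (x, y)
       = (output_weight m W y + parity_sign (x \<inter> S) * walsh (users m) (\<lambda>x. W x y) S) / 2 ^ m"
proof -
  have "output_weight m W y + parity_sign (x \<inter> S) * walsh (users m) (\<lambda>x. W x y) S
      = (\<Sum>x'\<in>Pow (users m). W x' y * (1 + parity_sign (x \<inter> S) * parity_sign (x' \<inter> S)))"
    unfolding output_weight_def walsh_def by (simp add: sum_distrib_left sum.distrib algebra_simps)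
  also have "\<dots> = (\<Sum>x'\<in>Pow (users m). if odd (card (x' \<inter> S)) = odd (card (x \<inter> S)) then 2 * W x' y else 0)"
  proof (intro sum.cong refl)
    fix x'
    show "W x' y * (1 + parity_sign (x \<inter> S) * parity_sign (x' \<inter> S))
        = (if odd (card (x' \<inter> S)) = odd (card (x \<inter> S)) then 2 * W x' y else 0)"
      using parity_sign_cases[of "x \<inter> S"] parity_sign_cases[of "x' \<inter> S"]
        parity_sign_eq_neg1_iff[of "x \<inter> S"] parity_sign_eq_neg1_iff[of "x' \<inter> S"]
      by auto
  qed
  also have "\<dots> = 2 * (\<Sum>x'\<in>{x'\<in>Pow (users m). odd (card (x' \<inter> S)) = odd (card (x \<inter> S))}. W x' y)"
    by (simp add: sum.inter_filter[symmetric] sum_distrib_left)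
  finally show ?thesis
    using atom_prob_mac_output[OF assms, of W "\<lambda>x. odd (card (x \<inter> S))" y] by simp
qed

lemma le_marginal:
  assumes "binary_mac m W" and "x \<subseteq> users m"
  shows "W x y \<le> marginal (users m) U (\<lambda>x. W x y) (x \<inter> U)"
proof -
  have "W x y = (\<Sum>x'\<in>{x}. W x' y)" by simp
  also have "\<dots> \<le> marginal (users m) U (\<lambda>x. W x y) (x \<inter> U)"
    unfolding marginal_def using assms by (intro sum_mono2) (auto simp: binary_mac_nonneg)
  finally show ?thesis .
qed

lemma output_weight_nonneg: "binary_mac m W \<Longrightarrow> 0 \<le> output_weight m W y"
  unfolding output_weight_def by (intro sum_nonneg) (auto simp: binary_mac_nonneg)

lemma le_output_weight: "binary_mac m W \<Longrightarrow> x \<subseteq> users m \<Longrightarrow> W x y \<le> output_weight m W y"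
  using le_marginal[of m W x y "{}"] by (simp add: marginal_empty output_weight_def)

lemma output_weight_pos: "binary_mac m W \<Longrightarrow> x \<subseteq> users m \<Longrightarrow> W x y \<noteq> 0 \<Longrightarrow> 0 < output_weight m W y"
  using le_output_weight[of m W x y] binary_mac_nonneg[of m W x y] by linarith

lemma ex_ne_0_of_output_weight_pos:
  assumes "0 < output_weight m W y"
  shows "\<exists>x\<subseteq>users m. W x y \<noteq> 0"
proof -
  have "marginal (users m) {} (\<lambda>x. W x y) {} \<noteq> 0"
    using assms by (simp add: marginal_empty output_weight_def)
  from ex_ne_0_of_marginal_ne_0[OF this] show ?thesis
    by auto
qed

lemma ex_output_weight_pos:
  assumes "binary_mac m (W :: nat set \<Rightarrow> 'b::finite \<Rightarrow> real)"
  shows "\<exists>y. 0 < output_weight m W y"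
proof (rule ccontr)
  assume "\<not> ?thesis"
  then have "output_weight m W y = 0" for y
    using output_weight_nonneg[OF assms, of y] by (simp add: not_less order_antisym)
  moreover have "(\<Sum>y\<in>UNIV. output_weight m W y) = (\<Sum>x\<in>Pow (users m). \<Sum>y\<in>UNIV. W x y)"
    unfolding output_weight_def by (rule sum.swap)
  moreover have "\<dots> = (\<Sum>x\<in>Pow (users m). 1)"
    using assms unfolding binary_mac_def inputs_def by (intro sum.cong) auto
  ultimately show False by (simp add: card_Pow)
qed

lemma abs_walsh_le_output_weight:
  assumes "binary_mac m W"
  shows "\<bar>walsh (users m) (\<lambda>x. W x y) T\<bar> \<le> output_weight m W y"
proof -
  have "\<bar>walsh (users m) (\<lambda>x. W x y) T\<bar> \<le> (\<Sum>x\<in>Pow (users m). \<bar>W x y * parity_sign (x \<inter> T)\<bar>)"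
    unfolding walsh_def by (rule sum_abs)
  also have "\<dots> = output_weight m W y"
    unfolding output_weight_def
  proof (intro sum.cong refl)
    fix x assume "x \<in> Pow (users m)"
    then show "\<bar>W x y * parity_sign (x \<inter> T)\<bar> = W x y"
      using assms parity_sign_cases[of "x \<inter> T"] by (auto simp: abs_mult binary_mac_nonneg)
  qed
  finally show ?thesis .
qed

lemma mac_output_parity_pair:
  "(\<lambda>\<omega>. ((\<lambda>(x, y). y) \<omega>, (\<lambda>(x, y). odd (card (x \<inter> S))) \<omega>)) = (\<lambda>(x, y). (y, odd (card (x \<inter> S))))"
  by auto

section \<open>Integral conditional entropies force uniform posteriors\<close>

lemma entropy_mac_insert_eq_pair:
  "entropy \<Omega> p (\<lambda>\<omega>. ((\<lambda>(x, y). (y, x \<inter> U)) \<omega>, (\<lambda>(x, y). i \<in> x) \<omega>))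
     = entropy \<Omega> p (\<lambda>(x, y). (y, x \<inter> insert i U))"
  by (rule entropy_cong) (auto split: prod.splits)

lemma atom_prob_mac_insert_eq_pair:
  "\<omega> \<in> \<Omega> \<Longrightarrow> atom_prob \<Omega> p (\<lambda>\<omega>. ((\<lambda>(x, y). (y, x \<inter> U)) \<omega>, (\<lambda>(x, y). i \<in> x) \<omega>)) \<omega>
     = atom_prob \<Omega> p (\<lambda>(x, y). (y, x \<inter> insert i U)) \<omega>"
  by (rule atom_prob_cong) (auto split: prod.splits)

lemma post_entropy_insert_bounds:
  assumes "binary_mac m W"
  shows "post_entropy m W U \<le> post_entropy m W (insert i U)"
    and "post_entropy m W (insert i U) \<le> post_entropy m W U + 1"
proof -
  interpret finite_pmf "mac_space m" "mac_pmf m W" using assms by (rule finite_pmf_mac)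
  show "post_entropy m W U \<le> post_entropy m W (insert i U)"
    using entropy_le_entropy_pair[of "\<lambda>(x, y). (y, x \<inter> U)" "\<lambda>(x, y). i \<in> x"]
    unfolding post_entropy_def entropy_mac_insert_eq_pair by simp
  show "post_entropy m W (insert i U) \<le> post_entropy m W U + 1"
    using entropy_pair_bool_le[of "\<lambda>(x, y). (y, x \<inter> U)" "\<lambda>(x, y). i \<in> x"]
    unfolding post_entropy_def entropy_mac_insert_eq_pair by simp
qed

lemma marginal_insert_eq_of_post_entropy_eq:
  assumes "binary_mac m W" and "post_entropy m W (insert i U) = post_entropy m W U"
    and "x \<subseteq> users m" and "0 < W x y"
  shows "marginal (users m) (insert i U) (\<lambda>x. W x y) (x \<inter> insert i U) = marginal (users m) U (\<lambda>x. W x y) (x \<inter> U)"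
proof -
  interpret finite_pmf "mac_space m" "mac_pmf m W" using assms(1) by (rule finite_pmf_mac)
  have \<omega>: "(x, y) \<in> mac_space m" "0 < mac_pmf m W (x, y)"
    using mem_mac_space[OF assms(3)] mac_pmf_pos[OF assms(1,3)] assms(4) by auto
  show ?thesis
    using atom_prob_pair_eq_of_entropy_eq[of "\<lambda>(x, y). (y, x \<inter> U)" "\<lambda>(x, y). i \<in> x", OF _ \<omega>] assms(2)
    unfolding post_entropy_def entropy_mac_insert_eq_pair atom_prob_mac_insert_eq_pair[OF \<omega>(1)]
    by (simp add: atom_prob_mac_restrict[OF assms(3)])
qed

lemma marginal_eq_twice_of_post_entropy_insert:
  assumes "binary_mac m W" and "post_entropy m W (insert i U) = post_entropy m W U + 1"
    and "x \<subseteq> users m" and "0 < W x y"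
  shows "marginal (users m) U (\<lambda>x. W x y) (x \<inter> U) = 2 * marginal (users m) (insert i U) (\<lambda>x. W x y) (x \<inter> insert i U)"
proof -
  interpret finite_pmf "mac_space m" "mac_pmf m W" using assms(1) by (rule finite_pmf_mac)
  have \<omega>: "(x, y) \<in> mac_space m" "0 < mac_pmf m W (x, y)"
    using mem_mac_space[OF assms(3)] mac_pmf_pos[OF assms(1,3)] assms(4) by auto
  show ?thesis
    using atom_prob_eq_twice_of_entropy_pair_bool[of "\<lambda>(x, y). (y, x \<inter> U)" "\<lambda>(x, y). i \<in> x", OF _ \<omega>] assms(2)
    unfolding post_entropy_def entropy_mac_insert_eq_pair atom_prob_mac_insert_eq_pair[OF \<omega>(1)]
    by (simp add: atom_prob_mac_restrict[OF assms(3)])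
qed

lemma post_entropy_insert_cases:
  assumes "binary_mac m W" and "post_entropy m W (insert i U) - post_entropy m W U \<in> \<int>"
  shows "post_entropy m W (insert i U) = post_entropy m W U
    \<or> post_entropy m W (insert i U) = post_entropy m W U + 1"
  using Ints_zero_or_one[OF assms(2)] post_entropy_insert_bounds[OF assms(1), where U=U and i=i] by force

lemma marginal_insert_of_post_entropy_Ints:
  assumes bm: "binary_mac m W" and "post_entropy m W (insert i U) - post_entropy m W U \<in> \<int>"
    and x: "x \<subseteq> users m" "0 < W x y"
    and M: "marginal (users m) U (\<lambda>x. W x y) (x \<inter> U) = output_weight m W y * 2 powr - post_entropy m W U"
  shows "marginal (users m) (insert i U) (\<lambda>x. W x y) (x \<inter> insert i U)
    = output_weight m W y * 2 powr - post_entropy m W (insert i U)"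
  using post_entropy_insert_cases[OF assms(1,2)]
proof
  assume "post_entropy m W (insert i U) = post_entropy m W U"
  then show ?thesis
    using marginal_insert_eq_of_post_entropy_eq[OF bm _ x] M by simp
next
  assume succ: "post_entropy m W (insert i U) = post_entropy m W U + 1"
  then have "2 powr - post_entropy m W (insert i U) = 2 powr - post_entropy m W U / 2"
    by (simp add: powr_diff)
  moreover have "marginal (users m) (insert i U) (\<lambda>x. W x y) (x \<inter> insert i U)
      = output_weight m W y * 2 powr - post_entropy m W U / 2"
    using marginal_eq_twice_of_post_entropy_insert[OF bm succ x] M by simp
  ultimately show ?thesis
    by (metis times_divide_eq_right)
qed

lemma marginal_dichotomy_of_post_entropy_Ints:
  assumes bm: "binary_mac m W" and ints: "\<forall>U\<subseteq>users m. post_entropy m W U \<in> \<int>" and "U \<subseteq> users m"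
  shows "marginal (users m) U (\<lambda>x. W x y) a = 0
    \<or> marginal (users m) U (\<lambda>x. W x y) a = output_weight m W y * 2 powr - post_entropy m W U"
proof -
  have "finite U" using assms(3) by (rule finite_subset) simp
  then show ?thesis
    using assms(3)
  proof (induction U arbitrary: a rule: finite_induct)
    case empty
    have "marginal (users m) {} (\<lambda>x. W x y) a = (if a = {} then output_weight m W y else 0)"
      by (simp only: marginal_empty output_weight_def)
    then show ?case by simp
  next
    case (insert i U)
    show ?case
    proof (cases "marginal (users m) (insert i U) (\<lambda>x. W x y) a = 0")
      case False
      with ex_ne_0_of_marginal_ne_0 obtain x where x: "x \<subseteq> users m" "x \<inter> insert i U = a" "W x y \<noteq> 0"
        by (metis PowD)
      then have pos: "0 < W x y"
        using binary_mac_nonneg[OF bm x(1)] by (simp add: order_le_neq_trans)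
      then have "0 < marginal (users m) U (\<lambda>x. W x y) (x \<inter> U)"
        using le_marginal[OF bm x(1), of y U] by linarith
      then have IH: "marginal (users m) U (\<lambda>x. W x y) (x \<inter> U) = output_weight m W y * 2 powr - post_entropy m W U"
        using insert.IH[of "x \<inter> U"] insert.prems by auto
      have step: "post_entropy m W (insert i U) - post_entropy m W U \<in> \<int>"
        using ints insert.prems by (intro Ints_diff) auto
      show ?thesis
        using marginal_insert_of_post_entropy_Ints[OF bm step x(1) pos IH] x(2) by simp
    qed (rule disjI1)
  qed
qed

text \<open>\<open>parity_bias m W y T\<close> is E[(-1)^(X[E_m].T) | Y = y]; it is junk (0) for outputs of probability 0.\<close>

definition parity_bias :: "nat \<Rightarrow> (nat set \<Rightarrow> 'b::finite \<Rightarrow> real) \<Rightarrow> 'b \<Rightarrow> nat set \<Rightarrow> real" where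
  "parity_bias m W y T = walsh (users m) (\<lambda>x. W x y) T / output_weight m W y"

lemma parity_bias_empty: "0 < output_weight m W y \<Longrightarrow> parity_bias m W y {} = 1"
  by (simp add: parity_bias_def walsh_empty output_weight_def)

lemma abs_parity_bias_le_1:
  assumes "binary_mac m W"
  shows "\<bar>parity_bias m W y T\<bar> \<le> 1"
proof (cases "output_weight m W y = 0")
  case False
  then have "0 < output_weight m W y"
    using output_weight_nonneg[OF assms, of y] by simp
  then show ?thesis
    using abs_walsh_le_output_weight[OF assms, of y T] by (simp add: parity_bias_def abs_divide)
qed (simp add: parity_bias_def)

lemma sum_parity_bias_sq:
  assumes bm: "binary_mac m W" and ints: "\<forall>U\<subseteq>users m. post_entropy m W U \<in> \<int>"
    and U: "U \<subseteq> users m" and pos: "0 < output_weight m W y"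
  shows "(\<Sum>T\<in>Pow U. (parity_bias m W y T)\<^sup>2) = 2 powr (card U - post_entropy m W U)"
proof -
  let ?M = "marginal (users m) U (\<lambda>x. W x y)" and ?w = "output_weight m W y"
  define c where "c = 2 powr - post_entropy m W U"
  have fin_U: "finite U" using U by (rule finite_subset) simp
  \<comment> \<open>The marginal is uniform on its support, so its square is proportional to itself.\<close>
  have "(\<Sum>a\<in>Pow U. (?M a)\<^sup>2) = (\<Sum>a\<in>Pow U. ?M a * (?w * c))"
  proof (intro sum.cong refl)
    fix a
    show "(?M a)\<^sup>2 = ?M a * (?w * c)"
      using marginal_dichotomy_of_post_entropy_Ints[OF bm ints U, of y a]
      unfolding c_def power2_eq_square by (elim disjE) simp_all
  qed
  also have "\<dots> = ?w\<^sup>2 * c"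
    using sum_marginal[OF finite_users U, of "\<lambda>x. W x y"]
    by (simp add: sum_distrib_right[symmetric] output_weight_def power2_eq_square)
  finally have "(\<Sum>a\<in>Pow U. (?M a)\<^sup>2) = ?w\<^sup>2 * c" .
  moreover have "(\<Sum>T\<in>Pow U. (parity_bias m W y T)\<^sup>2) = (\<Sum>T\<in>Pow U. (walsh U ?M T)\<^sup>2) / ?w\<^sup>2"
    unfolding parity_bias_def power_divide sum_divide_distrib
    using walsh_marginal[OF finite_users U] by (intro sum.cong) auto
  moreover have "2 ^ card U * c = 2 powr (card U - post_entropy m W U)"
    unfolding c_def by (simp add: powr_diff powr_realpow powr_minus divide_inverse)
  ultimately show ?thesis
    using walsh_parseval[OF fin_U, of ?M] pos by simp
qed

lemma parity_bias_sq_zero_or_one: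
  assumes bm: "binary_mac m W" and ints: "\<forall>U\<subseteq>users m. post_entropy m W U \<in> \<int>"
    and T: "T \<subseteq> users m" and pos: "0 < output_weight m W y"
  shows "(parity_bias m W y T)\<^sup>2 = 0 \<or> (parity_bias m W y T)\<^sup>2 = 1"
proof -
  have "(\<Sum>T\<in>Pow U. (parity_bias m W y T)\<^sup>2) \<in> \<int>" if U: "U \<subseteq> users m" for U
  proof -
    have "(\<Sum>T\<in>{{}}. (parity_bias m W y T)\<^sup>2) \<le> (\<Sum>T\<in>Pow U. (parity_bias m W y T)\<^sup>2)"
      using finite_subset[OF U finite_users] by (intro sum_mono2) auto
    then have "1 \<le> 2 powr (card U - post_entropy m W U)"
      using sum_parity_bias_sq[OF bm ints U pos] parity_bias_empty[OF pos] by simp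
    moreover have "card U - post_entropy m W U \<in> \<int>"
      using ints U by (intro Ints_diff) auto
    ultimately show ?thesis
      using sum_parity_bias_sq[OF bm ints U pos] two_powr_Ints by simp
  qed
  then have "(parity_bias m W y T)\<^sup>2 \<in> \<int>"
    using Ints_of_sum_Pow_Ints[OF finite_users _ T] by blast
  moreover have "\<bar>parity_bias m W y T\<bar>\<^sup>2 \<le> 1"
    using abs_parity_bias_le_1[OF bm, of y T] by (intro power_le_one) auto
  ultimately show ?thesis
    using Ints_zero_or_one[of "(parity_bias m W y T)\<^sup>2"] by simp
qed

lemma parity_bias_sq_eq_of_post_entropy_eq:
  assumes bmW: "binary_mac m W" and intsW: "\<forall>U\<subseteq>users m. post_entropy m W U \<in> \<int>"
    and bmV: "binary_mac m V" and intsV: "\<forall>U\<subseteq>users m. post_entropy m V U \<in> \<int>"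
    and eq: "\<forall>U\<subseteq>users m. post_entropy m W U = post_entropy m V U"
    and posW: "0 < output_weight m W y" and posV: "0 < output_weight m V y'"
    and T: "T \<subseteq> users m"
  shows "(parity_bias m W y T)\<^sup>2 = (parity_bias m V y' T)\<^sup>2"
proof (rule eq_of_sum_Pow_eq[OF finite_users _ T])
  fix U assume "U \<subseteq> users m"
  then show "(\<Sum>T\<in>Pow U. (parity_bias m W y T)\<^sup>2) = (\<Sum>T\<in>Pow U. (parity_bias m V y' T)\<^sup>2)"
    using sum_parity_bias_sq[OF bmW intsW _ posW] sum_parity_bias_sq[OF bmV intsV _ posV] eq by simp
qed

section \<open>Parities determined by or independent of the output\<close>

definition parity_determined :: "nat \<Rightarrow> (nat set \<Rightarrow> 'b::finite \<Rightarrow> real) \<Rightarrow> nat set \<Rightarrow> bool" where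
  "parity_determined m W T \<longleftrightarrow> (\<forall>y. \<forall>x\<in>Pow (users m). \<forall>x'\<in>Pow (users m).
     W x y \<noteq> 0 \<longrightarrow> W x' y \<noteq> 0 \<longrightarrow> parity_sign (x \<inter> T) = parity_sign (x' \<inter> T))"

text \<open>A balanced parity is uniformly distributed given every output, i.e. independent of Y.\<close>

definition parity_balanced :: "nat \<Rightarrow> (nat set \<Rightarrow> 'b::finite \<Rightarrow> real) \<Rightarrow> nat set \<Rightarrow> bool" where
  "parity_balanced m W T \<longleftrightarrow> (\<forall>y. walsh (users m) (\<lambda>x. W x y) T = 0)"

definition parity_dichotomous :: "nat \<Rightarrow> (nat set \<Rightarrow> 'b::finite \<Rightarrow> real) \<Rightarrow> bool" where
  "parity_dichotomous m W \<longleftrightarrow> (\<forall>T\<subseteq>users m. parity_determined m W T \<or> parity_balanced m W T)"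

lemma parity_determined_empty: "parity_determined m W {}"
  by (simp add: parity_determined_def)

lemma parity_determined_sym_diff:
  assumes "parity_determined m W T" and "parity_determined m W T'"
  shows "parity_determined m W (sym_diff T T')"
proof -
  have "parity_sign (x \<inter> sym_diff T T') = parity_sign (x \<inter> T) * parity_sign (x \<inter> T')"
    if "x \<in> Pow (users m)" for x
    using that by (intro parity_sign_Int_sym_diff) (simp add: finite_subset)
  with assms show ?thesis
    unfolding parity_determined_def by metis
qed

lemma walsh_eq_of_parity_determined:
  assumes "parity_determined m W T" and "x\<^sub>0 \<subseteq> users m" and "W x\<^sub>0 y \<noteq> 0"
  shows "walsh (users m) (\<lambda>x. W x y) T = parity_sign (x\<^sub>0 \<inter> T) * output_weight m W y"
proof -
  have "walsh (users m) (\<lambda>x. W x y) T = (\<Sum>x\<in>Pow (users m). W x y * parity_sign (x\<^sub>0 \<inter> T))"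
    unfolding walsh_def
  proof (intro sum.cong refl)
    fix x assume "x \<in> Pow (users m)"
    moreover have "parity_sign (x \<inter> T) = parity_sign (x\<^sub>0 \<inter> T)" if "W x y \<noteq> 0"
      using assms that \<open>x \<in> Pow (users m)\<close> unfolding parity_determined_def by blast
    ultimately show "W x y * parity_sign (x \<inter> T) = W x y * parity_sign (x\<^sub>0 \<inter> T)"
      by (cases "W x y = 0") simp_all
  qed
  then show ?thesis
    by (simp only: output_weight_def sum_distrib_right[symmetric] mult.commute)
qed

lemma parity_sign_eq_of_walsh_eq:
  assumes bm: "binary_mac m W" and walsh: "walsh (users m) (\<lambda>x. W x y) T = s * output_weight m W y"
    and s: "s = 1 \<or> s = -1" and x: "x \<subseteq> users m" and Wx: "W x y \<noteq> 0"
  shows "parity_sign (x \<inter> T) = s"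
proof -
  \<comment> \<open>The Walsh coefficient is a weighted sum of signs, so it is \<open>s\<close> times the total weight
    only if every sign on the support equals \<open>s\<close>.\<close>
  have nonneg: "0 \<le> W x' y * (1 - s * parity_sign (x' \<inter> T))" if "x' \<in> Pow (users m)" for x'
    using that s parity_sign_cases[of "x' \<inter> T"] binary_mac_nonneg[OF bm] by auto
  have "(\<Sum>x'\<in>Pow (users m). W x' y * (1 - s * parity_sign (x' \<inter> T)))
      = output_weight m W y - s * walsh (users m) (\<lambda>x. W x y) T"
    unfolding output_weight_def walsh_def by (simp add: algebra_simps sum_subtractf sum_distrib_left)
  also have "\<dots> = 0"
    using walsh s by auto
  finally have "W x y * (1 - s * parity_sign (x \<inter> T)) = 0"
    using x by (subst (asm) sum_nonneg_eq_0_iff) (use nonneg in auto)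
  then show ?thesis
    using Wx s parity_sign_cases[of "x \<inter> T"] by auto
qed

lemma parity_determined_iff_parity_bias_sq:
  assumes bm: "binary_mac m W"
  shows "parity_determined m W T \<longleftrightarrow> (\<forall>y. 0 < output_weight m W y \<longrightarrow> (parity_bias m W y T)\<^sup>2 = 1)"
proof (intro iffI allI impI)
  fix y assume det: "parity_determined m W T" and pos: "0 < output_weight m W y"
  obtain x where x: "x \<subseteq> users m" "W x y \<noteq> 0"
    using ex_ne_0_of_output_weight_pos[OF pos] by auto
  show "(parity_bias m W y T)\<^sup>2 = 1"
    using walsh_eq_of_parity_determined[OF det x] pos parity_sign_cases[of "x \<inter> T"]
    by (auto simp: parity_bias_def)
next
  assume bias: "\<forall>y. 0 < output_weight m W y \<longrightarrow> (parity_bias m W y T)\<^sup>2 = 1"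
  have "parity_sign (x \<inter> T) = parity_sign (x' \<inter> T)"
    if x: "x \<subseteq> users m" "W x y \<noteq> 0" and x': "x' \<subseteq> users m" "W x' y \<noteq> 0" for x x' y
  proof -
    have pos: "0 < output_weight m W y" by (rule output_weight_pos[OF bm x])
    then have "parity_bias m W y T = 1 \<or> parity_bias m W y T = -1"
      using bias power2_eq_1_iff by blast
    moreover have "walsh (users m) (\<lambda>x. W x y) T = parity_bias m W y T * output_weight m W y"
      using pos by (simp add: parity_bias_def)
    ultimately show ?thesis
      using parity_sign_eq_of_walsh_eq[OF bm] x x' by metis
  qed
  then show "parity_determined m W T"
    unfolding parity_determined_def by blast
qed

lemma parity_dichotomous_of_post_entropy_Ints:
  assumes bm: "binary_mac m W" and ints: "\<forall>U\<subseteq>users m. post_entropy m W U \<in> \<int>"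
  shows "parity_dichotomous m W"
  unfolding parity_dichotomous_def
proof (intro allI impI)
  fix T assume T: "T \<subseteq> users m"
  obtain y\<^sub>0 where y\<^sub>0: "0 < output_weight m W y\<^sub>0"
    using ex_output_weight_pos[OF bm] by blast
  have same: "(parity_bias m W y T)\<^sup>2 = (parity_bias m W y\<^sub>0 T)\<^sup>2" if "0 < output_weight m W y" for y
    using parity_bias_sq_eq_of_post_entropy_eq[OF bm ints bm ints _ that y\<^sub>0 T] by simp
  from parity_bias_sq_zero_or_one[OF bm ints T y\<^sub>0]
  show "parity_determined m W T \<or> parity_balanced m W T"
  proof
    assume zero: "(parity_bias m W y\<^sub>0 T)\<^sup>2 = 0"
    have "walsh (users m) (\<lambda>x. W x y) T = 0" for y
    proof (cases "0 < output_weight m W y")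
      case True
      then have "(parity_bias m W y T)\<^sup>2 = 0" using same zero by simp
      with True show ?thesis by (simp add: parity_bias_def)
    next
      case False
      then show ?thesis
        using abs_walsh_le_output_weight[OF bm, of y T] by linarith
    qed
    then show ?thesis by (simp add: parity_balanced_def)
  next
    assume "(parity_bias m W y\<^sub>0 T)\<^sup>2 = 1"
    then show ?thesis
      using same parity_determined_iff_parity_bias_sq[OF bm] by auto
  qed
qed

lemma parity_determined_eq_of_post_entropy_eq:
  assumes bmW: "binary_mac m W" and intsW: "\<forall>U\<subseteq>users m. post_entropy m W U \<in> \<int>"
    and bmV: "binary_mac m V" and intsV: "\<forall>U\<subseteq>users m. post_entropy m V U \<in> \<int>"
    and eq: "\<forall>U\<subseteq>users m. post_entropy m W U = post_entropy m V U" and T: "T \<subseteq> users m"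
  shows "parity_determined m W T \<longleftrightarrow> parity_determined m V T"
proof -
  obtain y\<^sub>W y\<^sub>V where pos: "0 < output_weight m W y\<^sub>W" "0 < output_weight m V y\<^sub>V"
    using ex_output_weight_pos[OF bmW] ex_output_weight_pos[OF bmV] by blast
  have "(parity_bias m W y T)\<^sup>2 = (parity_bias m V y\<^sub>V T)\<^sup>2" if "0 < output_weight m W y" for y
    by (rule parity_bias_sq_eq_of_post_entropy_eq[OF bmW intsW bmV intsV eq that pos(2) T])
  moreover have "(parity_bias m V y T)\<^sup>2 = (parity_bias m W y\<^sub>W T)\<^sup>2" if "0 < output_weight m V y" for y
    using eq by (intro parity_bias_sq_eq_of_post_entropy_eq[OF bmV intsV bmW intsW _ that pos(1) T]) simp
  ultimately show ?thesis
    using pos unfolding parity_determined_iff_parity_bias_sq[OF bmW] parity_determined_iff_parity_bias_sq[OF bmV]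
    by metis
qed

lemma lin_mi_of_parity_determined:
  assumes bm: "binary_mac m (W :: nat set \<Rightarrow> 'b::finite \<Rightarrow> real)"
    and S: "S \<subseteq> users m" "S \<noteq> {}" and det: "parity_determined m W S"
  shows "lin_mi m W S = 1"
proof -
  interpret finite_pmf "mac_space m" "mac_pmf m W" using bm by (rule finite_pmf_mac)
  have "entropy (mac_space m) (mac_pmf m W) (\<lambda>(x, y). (y, odd (card (x \<inter> S))))
      = entropy (mac_space m) (mac_pmf m W) (\<lambda>(x, y). y) - log 2 1"
  proof (rule entropy_eq_of_atom_prob_scaled)
    fix \<omega> :: "nat set \<times> 'b" assume "\<omega> \<in> mac_space m" "0 < mac_pmf m W \<omega>"
    then obtain x y where \<omega>: "\<omega> = (x, y)" and x: "x \<subseteq> users m" "W x y \<noteq> 0"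
      by (rule mac_pmf_pos_cases)
    show "atom_prob (mac_space m) (mac_pmf m W) (\<lambda>(x, y). (y, odd (card (x \<inter> S)))) \<omega>
        = 1 * atom_prob (mac_space m) (mac_pmf m W) (\<lambda>(x, y). y) \<omega>"
      using atom_prob_mac_parity[OF x(1), of W S y] walsh_eq_of_parity_determined[OF det x]
      unfolding \<omega> atom_prob_mac_output_only[OF x(1)] by (simp add: mult.assoc[symmetric])
  qed simp
  then show ?thesis
    using lin_mi_eq_entropy[OF bm S] by simp
qed

lemma lin_mi_of_parity_balanced:
  assumes bm: "binary_mac m (W :: nat set \<Rightarrow> 'b::finite \<Rightarrow> real)"
    and S: "S \<subseteq> users m" "S \<noteq> {}" and bal: "parity_balanced m W S"
  shows "lin_mi m W S = 0"
proof -
  interpret finite_pmf "mac_space m" "mac_pmf m W" using bm by (rule finite_pmf_mac)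
  have "entropy (mac_space m) (mac_pmf m W) (\<lambda>(x, y). (y, odd (card (x \<inter> S))))
      = entropy (mac_space m) (mac_pmf m W) (\<lambda>(x, y). y) - log 2 (1 / 2)"
  proof (rule entropy_eq_of_atom_prob_scaled)
    fix \<omega> :: "nat set \<times> 'b" assume "\<omega> \<in> mac_space m" "0 < mac_pmf m W \<omega>"
    then obtain x y where \<omega>: "\<omega> = (x, y)" and x: "x \<subseteq> users m" "W x y \<noteq> 0"
      by (rule mac_pmf_pos_cases)
    show "atom_prob (mac_space m) (mac_pmf m W) (\<lambda>(x, y). (y, odd (card (x \<inter> S)))) \<omega>
        = 1 / 2 * atom_prob (mac_space m) (mac_pmf m W) (\<lambda>(x, y). y) \<omega>"
      using atom_prob_mac_parity[OF x(1), of W S y] bal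
      unfolding \<omega> atom_prob_mac_output_only[OF x(1)] parity_balanced_def by simp
  qed simp
  then show ?thesis
    using lin_mi_eq_entropy[OF bm S] by (simp add: log_divide)
qed

lemma parity_determined_of_lin_mi:
  assumes bm: "binary_mac m (W :: nat set \<Rightarrow> 'b::finite \<Rightarrow> real)"
    and S: "S \<subseteq> users m" "S \<noteq> {}" and lin: "lin_mi m W S = 1"
  shows "parity_determined m W S"
proof -
  interpret finite_pmf "mac_space m" "mac_pmf m W" using bm by (rule finite_pmf_mac)
  have "parity_sign (x' \<inter> S) = parity_sign (x \<inter> S)"
    if x: "x \<subseteq> users m" "W x y \<noteq> 0" and x': "x' \<subseteq> users m" "W x' y \<noteq> 0" for x x' y
  proof -
    have \<omega>: "(x, y) \<in> mac_space m" "0 < mac_pmf m W (x, y)"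
      using mem_mac_space[OF x(1)] mac_pmf_pos[OF bm x] by auto
    have "entropy (mac_space m) (mac_pmf m W) (\<lambda>(x, y). (y, odd (card (x \<inter> S))))
        = entropy (mac_space m) (mac_pmf m W) (\<lambda>(x, y). y)"
      using lin lin_mi_eq_entropy[OF bm S] by simp
    then have "atom_prob (mac_space m) (mac_pmf m W) (\<lambda>(x, y). (y, odd (card (x \<inter> S)))) (x, y)
        = atom_prob (mac_space m) (mac_pmf m W) (\<lambda>(x, y). y) (x, y)"
      using atom_prob_pair_eq_of_entropy_eq[OF _ \<omega>, of "\<lambda>(x, y). y" "\<lambda>(x, y). odd (card (x \<inter> S))"]
      unfolding mac_output_parity_pair by simp
    then have "parity_sign (x \<inter> S) * walsh (users m) (\<lambda>x. W x y) S = output_weight m W y"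
      using atom_prob_mac_parity[OF x(1), of W S y] atom_prob_mac_output_only[OF x(1), of W y]
      by (simp add: field_simps)
    then have "walsh (users m) (\<lambda>x. W x y) S = parity_sign (x \<inter> S) * output_weight m W y"
      by (metis mult.assoc mult_1 parity_sign_mult_self)
    then show ?thesis
      using parity_sign_eq_of_walsh_eq[OF bm _ parity_sign_cases x'] by blast
  qed
  then show ?thesis
    unfolding parity_determined_def by (metis PowD)
qed

lemma parity_balanced_of_lin_mi:
  assumes bm: "binary_mac m (W :: nat set \<Rightarrow> 'b::finite \<Rightarrow> real)"
    and S: "S \<subseteq> users m" "S \<noteq> {}" and lin: "lin_mi m W S = 0"
  shows "parity_balanced m W S"
proof -
  interpret finite_pmf "mac_space m" "mac_pmf m W" using bm by (rule finite_pmf_mac)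
  have "walsh (users m) (\<lambda>x. W x y) S = 0" for y
  proof (cases "0 < output_weight m W y")
    case True
    then obtain x where x: "x \<subseteq> users m" "W x y \<noteq> 0"
      using ex_ne_0_of_output_weight_pos[OF True] by auto
    have \<omega>: "(x, y) \<in> mac_space m" "0 < mac_pmf m W (x, y)"
      using mem_mac_space[OF x(1)] mac_pmf_pos[OF bm x] by auto
    have "entropy (mac_space m) (mac_pmf m W) (\<lambda>(x, y). (y, odd (card (x \<inter> S))))
        = entropy (mac_space m) (mac_pmf m W) (\<lambda>(x, y). y) + 1"
      using lin lin_mi_eq_entropy[OF bm S] by simp
    then have "atom_prob (mac_space m) (mac_pmf m W) (\<lambda>(x, y). y) (x, y)
        = 2 * atom_prob (mac_space m) (mac_pmf m W) (\<lambda>(x, y). (y, odd (card (x \<inter> S)))) (x, y)"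
      using atom_prob_eq_twice_of_entropy_pair_bool[OF _ \<omega>, of "\<lambda>(x, y). y" "\<lambda>(x, y). odd (card (x \<inter> S))"]
      unfolding mac_output_parity_pair by simp
    then have "parity_sign (x \<inter> S) * walsh (users m) (\<lambda>x. W x y) S = 0"
      using atom_prob_mac_parity[OF x(1), of W S y] atom_prob_mac_output_only[OF x(1), of W y]
      by (simp add: field_simps)
    then show ?thesis
      using parity_sign_cases[of "x \<inter> S"] by auto
  next
    case False
    then show ?thesis
      using abs_walsh_le_output_weight[OF bm, of y S] by linarith
  qed
  then show ?thesis
    unfolding parity_balanced_def by blast
qed

lemma lin_mi_of_parity_dichotomous:
  assumes bm: "binary_mac m (W :: nat set \<Rightarrow> 'b::finite \<Rightarrow> real)"
    and dich: "parity_dichotomous m W" and S: "S \<subseteq> users m"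
  shows "lin_mi m W S = (if S \<noteq> {} \<and> parity_determined m W S then 1 else 0)"
proof (cases "S = {}")
  case False
  then show ?thesis
    using dich S lin_mi_of_parity_determined[OF bm S False] lin_mi_of_parity_balanced[OF bm S False]
    unfolding parity_dichotomous_def by auto
qed (simp add: bm)

lemma parity_dichotomous_of_lin_mi:
  assumes bm: "binary_mac m (W :: nat set \<Rightarrow> 'b::finite \<Rightarrow> real)"
    and lin: "\<forall>S\<subseteq>users m. lin_mi m W S \<in> {0, 1}"
  shows "parity_dichotomous m W"
  unfolding parity_dichotomous_def
proof (intro allI impI)
  fix T assume T: "T \<subseteq> users m"
  show "parity_determined m W T \<or> parity_balanced m W T"
  proof (cases "T = {}")
    case False
    then show ?thesis
      using lin T parity_determined_of_lin_mi[OF bm T False] parity_balanced_of_lin_mi[OF bm T False] by auto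
  qed (simp add: parity_determined_empty)
qed

section \<open>Counting the determined parities\<close>

definition determined_sets :: "nat \<Rightarrow> (nat set \<Rightarrow> 'b::finite \<Rightarrow> real) \<Rightarrow> nat set \<Rightarrow> nat set set" where
  "determined_sets m W U = {T\<in>Pow U. parity_determined m W T}"

lemma card_determined_sets_pow2:
  assumes "U \<subseteq> users m"
  shows "\<exists>k. card (determined_sets m W U) = 2 ^ k"
proof (rule card_sym_diff_closed_eq_pow2)
  show "finite U" using assms by (rule finite_subset) simp
  show "sym_diff_closed (determined_sets m W U)"
    unfolding sym_diff_closed_def determined_sets_def using parity_determined_sym_diff by auto
qed (auto simp: determined_sets_def parity_determined_empty)

lemma card_determined_sets_pos: "U \<subseteq> users m \<Longrightarrow> 0 < card (determined_sets m W U)"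
  using card_determined_sets_pow2 by (metis gr0I power_not_zero zero_neq_numeral)

lemma marginal_of_parity_dichotomous:
  assumes bm: "binary_mac m W" and dich: "parity_dichotomous m W"
    and U: "U \<subseteq> users m" and a: "a \<subseteq> U" and x\<^sub>0: "x\<^sub>0 \<subseteq> users m" "W x\<^sub>0 y \<noteq> 0"
  shows "marginal (users m) U (\<lambda>x. W x y) a = 0
    \<or> marginal (users m) U (\<lambda>x. W x y) a = output_weight m W y * card (determined_sets m W U) / 2 ^ card U"
proof -
  let ?L = "determined_sets m W U" and ?w = "output_weight m W y"
  have fin_U: "finite U" using U by (rule finite_subset) simp
  have fin_L: "finite ?L" using fin_U by (simp add: determined_sets_def)
  define C where "C = sym_diff a x\<^sub>0"
  have "2 ^ card U * marginal (users m) U (\<lambda>x. W x y) a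
      = (\<Sum>T\<in>Pow U. parity_sign (a \<inter> T) * walsh (users m) (\<lambda>x. W x y) T)"
    unfolding walsh_inversion[OF fin_U a, symmetric]
    using walsh_marginal[OF finite_users U] by (intro sum.cong) auto
  also have "\<dots> = (\<Sum>T\<in>?L. parity_sign (a \<inter> T) * walsh (users m) (\<lambda>x. W x y) T)"
  proof (rule sum.mono_neutral_right)
    show "\<forall>T\<in>Pow U - ?L. parity_sign (a \<inter> T) * walsh (users m) (\<lambda>x. W x y) T = 0"
      using dich U unfolding parity_dichotomous_def parity_balanced_def determined_sets_def by auto
  qed (auto simp: fin_U determined_sets_def)
  also have "\<dots> = ?w * (\<Sum>T\<in>?L. parity_sign (C \<inter> T))"
    unfolding sum_distrib_left
  proof (rule sum.cong[OF refl])
    fix T assume "T \<in> ?L"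
    then have det: "parity_determined m W T" and "finite T"
      using fin_U by (auto simp: determined_sets_def finite_subset)
    then show "parity_sign (a \<inter> T) * walsh (users m) (\<lambda>x. W x y) T = ?w * parity_sign (C \<inter> T)"
      using walsh_eq_of_parity_determined[OF det x\<^sub>0] by (simp add: C_def parity_sign_sym_diff_Int)
  qed
  finally have "2 ^ card U * marginal (users m) U (\<lambda>x. W x y) a = ?w * (\<Sum>T\<in>?L. parity_sign (C \<inter> T))" .
  moreover have "(\<Sum>T\<in>?L. parity_sign (C \<inter> T)) = 0 \<or> (\<Sum>T\<in>?L. parity_sign (C \<inter> T)) = card ?L"
  proof (rule sum_parity_sign_Int_cases[OF fin_L])
    show "sym_diff_closed ?L"
      unfolding sym_diff_closed_def determined_sets_def using parity_determined_sym_diff by auto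
    show "finite C"
      using a x\<^sub>0 fin_U by (auto simp: C_def finite_subset)
  qed
  ultimately show ?thesis
    by (auto simp: field_simps)
qed

lemma post_entropy_of_parity_dichotomous:
  assumes bm: "binary_mac m (W :: nat set \<Rightarrow> 'b::finite \<Rightarrow> real)" and dich: "parity_dichotomous m W"
    and U: "U \<subseteq> users m"
  shows "post_entropy m W U = card U - log 2 (card (determined_sets m W U))"
proof -
  interpret finite_pmf "mac_space m" "mac_pmf m W" using bm by (rule finite_pmf_mac)
  define c where "c = card (determined_sets m W U) / 2 ^ card U"
  have c_pos: "0 < c" using card_determined_sets_pos[OF U, of W] by (simp add: c_def)
  have "entropy (mac_space m) (mac_pmf m W) (\<lambda>(x, y). (y, x \<inter> U))
      = entropy (mac_space m) (mac_pmf m W) (\<lambda>(x, y). y) - log 2 c"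
  proof (rule entropy_eq_of_atom_prob_scaled[OF c_pos])
    fix \<omega> :: "nat set \<times> 'b" assume "\<omega> \<in> mac_space m" "0 < mac_pmf m W \<omega>"
    then obtain x y where \<omega>: "\<omega> = (x, y)" and x: "x \<subseteq> users m" "W x y \<noteq> 0"
      by (rule mac_pmf_pos_cases)
    have "0 < W x y" using x binary_mac_nonneg[OF bm x(1)] by (simp add: order_le_neq_trans)
    then have "marginal (users m) U (\<lambda>x. W x y) (x \<inter> U) \<noteq> 0"
      using le_marginal[OF bm x(1), of y U] by linarith
    then have "marginal (users m) U (\<lambda>x. W x y) (x \<inter> U) = output_weight m W y * c"
      using marginal_of_parity_dichotomous[OF bm dich U _ x, of "x \<inter> U"] by (auto simp: c_def)
    then show "atom_prob (mac_space m) (mac_pmf m W) (\<lambda>(x, y). (y, x \<inter> U)) \<omega>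
        = c * atom_prob (mac_space m) (mac_pmf m W) (\<lambda>(x, y). y) \<omega>"
      unfolding \<omega> atom_prob_mac_restrict[OF x(1)] atom_prob_mac_output_only[OF x(1)] by simp
  qed
  then show ?thesis
    using card_determined_sets_pos[OF U, of W]
    by (simp add: post_entropy_def c_def log_divide)
qed

lemma cond_mi_of_parity_dichotomous:
  assumes bm: "binary_mac m (W :: nat set \<Rightarrow> 'b::finite \<Rightarrow> real)" and dich: "parity_dichotomous m W"
    and S: "S \<subseteq> users m"
  shows "cond_mi m W S = log 2 (card (determined_sets m W (users m))) - log 2 (card (determined_sets m W (users m - S)))"
proof -
  have "card (users m - S) = m - card S" "card S \<le> m"
    using S card_mono[OF finite_users S] by (simp_all add: card_Diff_subset finite_subset)
  then show ?thesis
    using cond_mi_eq_post_entropy[OF bm S] post_entropy_of_parity_dichotomous[OF bm dich]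
    by (simp add: of_nat_diff)
qed

section \<open>The two families of mutual informations\<close>

lemma parity_determined_iff_lin_mi:
  assumes "binary_mac m (W :: nat set \<Rightarrow> 'b::finite \<Rightarrow> real)" and "parity_dichotomous m W"
    and "T \<subseteq> users m"
  shows "parity_determined m W T \<longleftrightarrow> T = {} \<or> lin_mi m W T = 1"
  using lin_mi_of_parity_dichotomous[OF assms] by (auto simp: parity_determined_empty)

lemma parity_dichotomous_of_cond_mi_Ints:
  assumes "binary_mac m (W :: nat set \<Rightarrow> 'b::finite \<Rightarrow> real)" and "\<forall>S\<subseteq>users m. cond_mi m W S \<in> \<int>"
  shows "parity_dichotomous m W"
  using assms by (intro parity_dichotomous_of_post_entropy_Ints post_entropy_Ints_of_cond_mi_Ints)

lemma lin_mi_zero_or_one_of_parity_dichotomous: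
  assumes "binary_mac m (W :: nat set \<Rightarrow> 'b::finite \<Rightarrow> real)" and "parity_dichotomous m W"
    and "S \<subseteq> users m"
  shows "lin_mi m W S \<in> {0, 1}"
  using lin_mi_of_parity_dichotomous[OF assms] by simp

lemma cond_mi_Ints_of_parity_dichotomous:
  assumes "binary_mac m (W :: nat set \<Rightarrow> 'b::finite \<Rightarrow> real)" and "parity_dichotomous m W"
    and "S \<subseteq> users m"
  shows "cond_mi m W S \<in> \<int>"
proof -
  obtain j k where "card (determined_sets m W (users m)) = 2 ^ j" "card (determined_sets m W (users m - S)) = 2 ^ k"
    using card_determined_sets_pow2[of "users m"] card_determined_sets_pow2[of "users m - S"] by blast
  then show ?thesis
    using cond_mi_of_parity_dichotomous[OF assms] by simp
qed

lemma lin_mi_eq_of_cond_mi_eq: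
  assumes bmW: "binary_mac m (W :: nat set \<Rightarrow> 'b::finite \<Rightarrow> real)" and intsW: "\<forall>S\<subseteq>users m. cond_mi m W S \<in> \<int>"
    and bmV: "binary_mac m (V :: nat set \<Rightarrow> 'c::finite \<Rightarrow> real)" and intsV: "\<forall>S\<subseteq>users m. cond_mi m V S \<in> \<int>"
    and eq: "\<forall>S\<subseteq>users m. cond_mi m W S = cond_mi m V S" and S: "S \<subseteq> users m"
  shows "lin_mi m W S = lin_mi m V S"
proof -
  have "\<forall>U\<subseteq>users m. post_entropy m W U = post_entropy m V U"
    using eq by (simp add: post_entropy_eq_cond_mi bmW bmV)
  then have "parity_determined m W S \<longleftrightarrow> parity_determined m V S"
    using post_entropy_Ints_of_cond_mi_Ints[OF bmW intsW] post_entropy_Ints_of_cond_mi_Ints[OF bmV intsV]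
    by (intro parity_determined_eq_of_post_entropy_eq[OF bmW _ bmV _ _ S])
  then show ?thesis
    using lin_mi_of_parity_dichotomous[OF bmW parity_dichotomous_of_cond_mi_Ints[OF bmW intsW] S]
      lin_mi_of_parity_dichotomous[OF bmV parity_dichotomous_of_cond_mi_Ints[OF bmV intsV] S]
    by simp
qed

lemma cond_mi_eq_of_lin_mi_eq:
  assumes bmW: "binary_mac m (W :: nat set \<Rightarrow> 'b::finite \<Rightarrow> real)" and dichW: "parity_dichotomous m W"
    and bmV: "binary_mac m (V :: nat set \<Rightarrow> 'c::finite \<Rightarrow> real)" and dichV: "parity_dichotomous m V"
    and eq: "\<forall>S\<subseteq>users m. lin_mi m W S = lin_mi m V S" and S: "S \<subseteq> users m"
  shows "cond_mi m W S = cond_mi m V S"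
proof -
  have "determined_sets m W U = determined_sets m V U" if "U \<subseteq> users m" for U
    using that eq parity_determined_iff_lin_mi[OF bmW dichW] parity_determined_iff_lin_mi[OF bmV dichV]
    unfolding determined_sets_def by auto
  then show ?thesis
    using cond_mi_of_parity_dichotomous[OF bmW dichW S] cond_mi_of_parity_dichotomous[OF bmV dichV S]
    by simp
qed

theorem mainTheorem5:
  fixes m :: nat
    and W :: "nat set \<Rightarrow> 'b::finite \<Rightarrow> real"
    and V :: "nat set \<Rightarrow> 'c::finite \<Rightarrow> real"
  assumes "binary_mac m W" and "binary_mac m V"
  shows "((\<forall>S\<subseteq>users m. cond_mi m W S \<in> \<int>) \<longrightarrow>
            (\<forall>S\<subseteq>users m. lin_mi m W S \<in> {0, 1}))
       \<and> ((\<forall>S\<subseteq>users m. cond_mi m W S \<in> \<int>) \<and> (\<forall>S\<subseteq>users m. cond_mi m V S \<in> \<int>)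
            \<and> (\<forall>S\<subseteq>users m. cond_mi m W S = cond_mi m V S)
          \<longrightarrow> (\<forall>S\<subseteq>users m. lin_mi m W S = lin_mi m V S))
       \<and> ((\<forall>S\<subseteq>users m. lin_mi m W S \<in> {0, 1}) \<longrightarrow>
            (\<forall>S\<subseteq>users m. cond_mi m W S \<in> \<int>))
       \<and> ((\<forall>S\<subseteq>users m. lin_mi m W S \<in> {0, 1}) \<and> (\<forall>S\<subseteq>users m. lin_mi m V S \<in> {0, 1})
            \<and> (\<forall>S\<subseteq>users m. lin_mi m W S = lin_mi m V S)
          \<longrightarrow> (\<forall>S\<subseteq>users m. cond_mi m W S = cond_mi m V S))"
proof (intro conjI impI allI)
  fix S assume "S \<subseteq> users m"
  show "lin_mi m W S \<in> {0, 1}" if "\<forall>S\<subseteq>users m. cond_mi m W S \<in> \<int>"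
    using that \<open>S \<subseteq> users m\<close>
    by (intro lin_mi_zero_or_one_of_parity_dichotomous parity_dichotomous_of_cond_mi_Ints assms(1))
  show "lin_mi m W S = lin_mi m V S"
    if "(\<forall>S\<subseteq>users m. cond_mi m W S \<in> \<int>) \<and> (\<forall>S\<subseteq>users m. cond_mi m V S \<in> \<int>)
      \<and> (\<forall>S\<subseteq>users m. cond_mi m W S = cond_mi m V S)"
    using that by (intro lin_mi_eq_of_cond_mi_eq[OF assms(1) _ assms(2) _ _ \<open>S \<subseteq> users m\<close>]) simp_all
  show "cond_mi m W S \<in> \<int>" if "\<forall>S\<subseteq>users m. lin_mi m W S \<in> {0, 1}"
    using that \<open>S \<subseteq> users m\<close>
    by (intro cond_mi_Ints_of_parity_dichotomous parity_dichotomous_of_lin_mi assms(1))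
  show "cond_mi m W S = cond_mi m V S"
    if "(\<forall>S\<subseteq>users m. lin_mi m W S \<in> {0, 1}) \<and> (\<forall>S\<subseteq>users m. lin_mi m V S \<in> {0, 1})
      \<and> (\<forall>S\<subseteq>users m. lin_mi m W S = lin_mi m V S)"
    using that parity_dichotomous_of_lin_mi[OF assms(1)] parity_dichotomous_of_lin_mi[OF assms(2)]
    by (intro cond_mi_eq_of_lin_mi_eq[OF assms(1) _ assms(2) _ _ \<open>S \<subseteq> users m\<close>]) simp_all
qed

end
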